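(* Let $f:\mathbb{R}^n\times\mathbb{R}^N\to\mathbb{R}^n$ be continuous, let $\xi_1\in(0,1)$, $\xi_2<0$, $\varepsilon_0>0$, and consider the closed-loop system $$\dot x=f(x,u),\qquad \dot u=-\phi_\xi\big(\mathcal{G}_\theta(x,u)\big),\qquad \dot\theta=\varepsilon_0\Pi(\theta),\ \theta\in\Theta,$$ with $x\in\mathbb{R}^n$, $u\in\mathbb{R}^N$, $\theta\in\mathbb{R}^m$. Assume: (A1) there exist a $\mathcal{C}^1$, $\ell$-Lipschitz map $h:\mathbb{R}^N\to\mathbb{R}^n$ and constants $\gamma,\ell>0$ such that $f(h(u),u)=0$ for all $u\in\mathbb{R}^N$, and there exist $a>0$, $p\in(0,1)$, $q>1$ such that for all $x\in\mathbb{R}^n$ and $u,\hat u\in\mathbb{R}^N$: if $|x-h(\hat u)|\ge\gamma|u-\hat u|$ then $(x-h(\hat u))^\top f(x,u)\le-\frac a2|x-h(\hat u)|^{2p}-\frac a2|x-h(\hat u)|^{2q}$; (A2) $\Pi:\mathbb{R}^m\to\mathbb{R}^m$ is Lipschitz continuous and $\Theta\subset\mathbb{R}^m$ is compact and forward invariant under $\dot\theta=\varepsilon_0\Pi(\theta)$; (A3) the map $u\mapsto\Phi_\theta(u):=\phi_\theta(h(u),u)$ is $\mathcal{C}^1$, $L$-smooth and $\mu$-strongly convex uniformly in $\theta$, i.e. there exist $L,\mu>0$ with $|\nabla\Phi_\theta(\hat u)-\nabla\Phi_\theta(u)|\le L|\hat u-u|$ and $\Phi_\theta(\hat u)\ge\Phi_\theta(u)+\nabla\Phi_\theta(u)^\top(\hat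 u-u)+\frac\mu2|\hat u-u|^2$ for all $u,\hat u\in\mathbb{R}^N$ and all $\theta$; and there exists a $\mathcal{C}^1$ map $\varphi:\mathbb{R}^m\to\mathbb{R}^N$ with $\varphi(\theta)=\arg\min_u\Phi_\theta(u)$; (A4) there exists $K>0$ with $|\mathcal{G}_\theta(\hat x,u)-\mathcal{G}_\theta(x,u)|\le K|\hat x-x|$ for all $x,\hat x\in\mathbb{R}^n$, $u\in\mathbb{R}^N$, $\theta\in\mathbb{R}^m$. If moreover $\mu>K(\ell+\gamma)$, then there exist $\beta\in\mathcal{KL}_{\mathrm{FxT}}$ and $\varrho\in\mathcal{K}$ such that for each $x(0)\in\mathbb{R}^n$, $u(0)\in\mathbb{R}^N$, $\theta(0)\in\Theta$, every solution satisfies, for all $t\ge0$, $$\left|\begin{bmatrix}x(t)-h(\varphi(\theta(t)))\\ u(t)-\varphi(\theta(t))\end{bmatrix}\right|\le\beta\left(\left|\begin{bmatrix}x(0)-h(\varphi(\theta(0)))\\ u(0)-\varphi(\theta(0))\end{bmatrix}\right|,t\right)+\varrho\Big(\sup_{s\ge0}|\varepsilon_0\Pi(\theta(s))|\Big).$$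
   Context: $\phi_\theta:\mathbb{R}^n\times\mathbb{R}^N\to\mathbb{R}$ is a $\mathcal{C}^1$ cost function depending on a parameter $\theta\in\mathbb{R}^m$, and $\nabla\phi_\theta(x,u)\in\mathbb{R}^{n+N}$ is its gradient in $(x,u)$. $\mathcal{G}_\theta(x,u):=H(u)^\top\nabla\phi_\theta(x,u)$ where $H(u)^\top=[\,J_h(u)^\top\ \ I_N\,]$ and $J_h(u)\in\mathbb{R}^{n\times N}$ is the Jacobian of $h$. The map $\phi_\xi:\mathbb{R}^N\to\mathbb{R}^N$ is $\phi_\xi(s)=\frac{s}{|s|^{\xi_1}}+\frac{s}{|s|^{\xi_2}}$ for $s\ne0$ and $\phi_\xi(0)=0$ (continuous). Classes: $\mathcal{K}$ is the set of continuous strictly increasing $\alpha:\mathbb{R}_{\ge0}\to\mathbb{R}_{\ge0}$ with $\alpha(0)=0$. A continuous $\beta:\mathbb{R}_{\ge0}\times\mathbb{R}_{\ge0}\to\mathbb{R}_{\ge0}$ is of class $\mathcal{KL}_{\mathrm{FxT}}$ if $\beta(\cdot,0)\in\mathcal{K}$, each $\beta(r,\cdot)$ is continuous and non-increasing, and there is a continuous, uniformly bounded $T:\mathbb{R}_{\ge0}\to\mathbb{R}_{\ge0}$ with $T(0)=0$ and $\beta(r,t)=0$ for $t\ge T(r)$. $|\cdot|$ is the Euclidean norm. *)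

theory Defs
  imports "HOL-Analysis.Analysis"
begin

definition classK :: "(real \<Rightarrow> real) \<Rightarrow> bool" where
  "classK \<alpha> \<longleftrightarrow> continuous_on {0..} \<alpha> \<and> strict_mono_on {0..} \<alpha> \<and> \<alpha> 0 = 0
     \<and> (\<forall>r\<ge>0. \<alpha> r \<ge> 0)"

definition classKL_FxT :: "(real \<Rightarrow> real \<Rightarrow> real) \<Rightarrow> bool" where
  "classKL_FxT \<beta> \<longleftrightarrow>
     continuous_on ({0..} \<times> {0..}) (\<lambda>z. \<beta> (fst z) (snd z))
   \<and> (\<forall>r\<ge>0. \<forall>t\<ge>0. \<beta> r t \<ge> 0)
   \<and> classK (\<lambda>r. \<beta> r 0)
   \<and> (\<forall>r\<ge>0. continuous_on {0..} (\<beta> r) \<and> (\<forall>s t. 0 \<le> s \<longrightarrow> s \<le> t \<longrightarrow> \<beta> r t \<le> \<beta> r s))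
   \<and> (\<exists>T :: real \<Rightarrow> real. continuous_on {0..} T \<and> (\<forall>r\<ge>0. T r \<ge> 0)
        \<and> bounded (T ` {0..}) \<and> T 0 = 0 \<and> (\<forall>r\<ge>0. \<forall>t\<ge>T r. \<beta> r t = 0))"

definition phi_xi :: "real \<Rightarrow> real \<Rightarrow> 'a::real_normed_vector \<Rightarrow> 'a" where
  "phi_xi xi1 xi2 s = (if s = 0 then 0
      else (1 / norm s powr xi1) *\<^sub>R s + (1 / norm s powr xi2) *\<^sub>R s)"

text \<open>G_theta(x,u) = H(u)^T grad phi_theta(x,u) = J_h(u)^T (d_x phi) + (d_u phi),
  where gx, gu are the x- and u-blocks of the gradient of phi_theta.\<close>
definition Gmap :: "(real^'N \<Rightarrow> real^'N^'n) \<Rightarrow> (real^'m \<Rightarrow> real^'n \<Rightarrow> real^'N \<Rightarrow> real^'n)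
     \<Rightarrow> (real^'m \<Rightarrow> real^'n \<Rightarrow> real^'N \<Rightarrow> real^'N) \<Rightarrow> real^'m \<Rightarrow> real^'n \<Rightarrow> real^'N \<Rightarrow> real^'N" where
  "Gmap Jh gx gu \<theta> x u = transpose (Jh u) *v gx \<theta> x u + gu \<theta> x u"

end

theory Submission
  imports Defs
begin

text \<open>
  Write \<open>y = x - h (varphi \<theta>)\<close>, \<open>e = u - varphi \<theta>\<close> and compare \<open>V1 = |y|\<^sup>2\<close> with
  \<open>V2 = \<gamma>\<^sup>2 |e|\<^sup>2\<close>. Where \<open>V1\<close> is the larger, (A1) applies with \<open>uh = varphi \<theta>\<close>. Where \<open>V2\<close> is
  the larger, \<open>|x - h u| \<le> (\<gamma> + ell) |e|\<close>, so by (A4) the closed-loop gradient \<open>G\<close> is within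
  \<open>K (\<gamma> + ell) |e|\<close> of \<open>\<nabla>\<Phi>\<^sub>\<theta> u\<close>, and strong convexity with \<open>\<mu> > K (\<gamma> + ell)\<close> makes
  \<open>-\<phi>\<^sub>\<xi> G\<close> a descent direction for \<open>V2\<close>. The motion of the optimiser \<open>varphi (\<theta> t)\<close> enters
  both estimates as a disturbance bounded by a multiple of \<open>v = sup |\<epsilon>\<^sub>0 \<Pi> (\<theta> s)|\<close>, which is
  finite because \<open>\<Theta>\<close> is compact. Hence the larger of \<open>V1, V2\<close> obeys
  \<open>V' \<le> -k (V^((1+r)/2) + V^((1+s)/2)) + P \<surd>V\<close> with \<open>0 < r < 1 < s\<close> and \<open>P\<close> proportional to
  \<open>v\<close>. Above the level \<open>\<rho>\<^sup>2\<close> where \<open>P \<surd>V\<close> is absorbed, \<open>V^((1-s)/2)\<close> grows and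
  \<open>V^((1-r)/2)\<close> shrinks at linear rates along \<open>max V1 V2\<close>: on \<open>[0, t/2]\<close> the first brings
  \<open>max V1 V2\<close> below a bound independent of its initial value, and on \<open>[t/2, t]\<close> the second
  drives it down to \<open>\<rho>\<^sup>2\<close> in finite time.
\<close>

section \<open>Comparison lemmas for real functions\<close>

lemma le_if_locally_right_nonincreasing:
  fixes g :: "real \<Rightarrow> real"
  assumes ab: "a \<le> b" and cont: "continuous_on {a..b} g"
    and loc: "\<And>t. t \<in> {a..<b} \<Longrightarrow> \<exists>d>0. \<forall>s. t < s \<and> s < t + d \<and> s \<le> b \<longrightarrow> g s \<le> g t"
  shows "g b \<le> g a"
proof (rule ccontr)
  assume nb: "\<not> g b \<le> g a"
  define Z where "Z = {a..b} \<inter> g -` {..g a}"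
  have "compact Z"
    unfolding Z_def compact_eq_bounded_closed
    by (auto intro: continuous_closed_preimage[OF cont] bounded_subset[of "{a..b}"])
  moreover have "a \<in> Z" using ab by (auto simp: Z_def)
  ultimately obtain c where cZ: "c \<in> Z" and cmax: "\<forall>z\<in>Z. z \<le> c"
    using compact_attains_sup[of Z] by blast
  have "c \<noteq> b" using cZ nb by (auto simp: Z_def)
  hence cb: "c \<in> {a..<b}" using cZ by (auto simp: Z_def)
  obtain d where d: "d > 0" "\<forall>s. c < s \<and> s < c + d \<and> s \<le> b \<longrightarrow> g s \<le> g c"
    using loc[OF cb] by blast
  define s where "s = min (c + d/2) b"
  have s: "c < s" "s < c + d" "s \<le> b" using d cb by (auto simp: s_def)
  have "g s \<le> g c" using d s by blast
  also have "g c \<le> g a" using cZ by (auto simp: Z_def)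
  finally have "s \<in> Z" using s cb by (auto simp: Z_def)
  thus False using cmax s by force
qed

lemma right_bound_of_derivative:
  fixes Y :: "real \<Rightarrow> real"
  assumes der: "(Y has_real_derivative D) (at t within {a..b})" and t: "t \<in> {a..<b}"
    and Dm: "D \<le> -m" and e: "e > 0"
  shows "\<exists>d>0. \<forall>s. t < s \<and> s < t + d \<and> s \<le> b \<longrightarrow> Y s \<le> Y t - (m - e) * (s - t)"
proof -
  have "((\<lambda>y. (Y y - Y t) / (y - t)) \<longlongrightarrow> D) (at t within {a..b})"
    using der by (simp add: has_field_derivative_iff)
  hence "eventually (\<lambda>y. (Y y - Y t) / (y - t) < D + e) (at t within {a..b})"
    using e by (intro order_tendstoD(2)) auto
  then obtain d where d: "d > 0"
    "\<forall>y\<in>{a..b}. y \<noteq> t \<and> dist y t < d \<longrightarrow> (Y y - Y t) / (y - t) < D + e"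
    unfolding eventually_at by blast
  show ?thesis
  proof (intro exI[of _ d] conjI allI impI)
    fix s assume s: "t < s \<and> s < t + d \<and> s \<le> b"
    hence "(Y s - Y t) / (s - t) < D + e" using t d by (auto simp: dist_real_def)
    hence "Y s - Y t < (D + e) * (s - t)" using s by (simp add: divide_less_eq)
    also have "\<dots> \<le> (-m + e) * (s - t)" using Dm s by (intro mult_right_mono) auto
    finally show "Y s \<le> Y t - (m - e) * (s - t)" by (simp add: algebra_simps)
  qed (use d in auto)
qed

lemma right_bound_of_continuity:
  fixes Y :: "real \<Rightarrow> real"
  assumes cont: "continuous_on {a..b} Y" and t: "t \<in> {a..<b}" and lt: "Y t < c"
  shows "\<exists>d>0. \<forall>s. t < s \<and> s < t + d \<and> s \<le> b \<longrightarrow> Y s \<le> c - k * (s - t)"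
proof -
  have "((\<lambda>s. Y s + k * (s - t)) \<longlongrightarrow> Y t + k * (t - t)) (at t within {a..b})"
    using t by (intro continuous_on_def[THEN iffD1, rule_format] continuous_intros cont) auto
  hence "eventually (\<lambda>s. Y s + k * (s - t) < c) (at t within {a..b})"
    using lt by (intro order_tendstoD(2)) auto
  then obtain d where d: "d > 0" "\<forall>y\<in>{a..b}. y \<noteq> t \<and> dist y t < d \<longrightarrow> Y y + k * (y - t) < c"
    unfolding eventually_at by blast
  show ?thesis
  proof (intro exI[of _ d] conjI allI impI)
    fix s assume "t < s \<and> s < t + d \<and> s \<le> b"
    hence "Y s + k * (s - t) < c" using t d by (auto simp: dist_real_def)
    thus "Y s \<le> c - k * (s - t)" by simp
  qed (use d in auto)
qed

lemma max_right_bound: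
  fixes Y1 Y2 :: "real \<Rightarrow> real"
  assumes c1: "continuous_on {a..b} Y1" and c2: "continuous_on {a..b} Y2"
    and d1: "\<And>t. t \<in> {a..<b} \<Longrightarrow> Y1 t \<ge> Y2 t \<Longrightarrow>
      \<exists>D. (Y1 has_real_derivative D) (at t within {a..b}) \<and> D \<le> -m"
    and d2: "\<And>t. t \<in> {a..<b} \<Longrightarrow> Y2 t \<ge> Y1 t \<Longrightarrow>
      \<exists>D. (Y2 has_real_derivative D) (at t within {a..b}) \<and> D \<le> -m"
    and t: "t \<in> {a..<b}" and e: "e > 0"
  shows "\<exists>d>0. \<forall>s. t < s \<and> s < t + d \<and> s \<le> b \<longrightarrow>
    max (Y1 s) (Y2 s) \<le> max (Y1 t) (Y2 t) - (m - e) * (s - t)"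
proof -
  have loc: "\<exists>d>0. \<forall>s. t < s \<and> s < t + d \<and> s \<le> b \<longrightarrow> Y s \<le> max (Y1 t) (Y2 t) - (m - e) * (s - t)"
    if Y: "(Y = Y1 \<and> Y2 = Z) \<or> (Y = Y2 \<and> Y1 = Z)" for Y Z
  proof (cases "Y t = max (Y1 t) (Y2 t)")
    case True
    then obtain D where "(Y has_real_derivative D) (at t within {a..b})" "D \<le> -m"
      using d1[OF t] d2[OF t] Y by (metis max.cobounded1 max.cobounded2)
    from right_bound_of_derivative[OF this(1) t this(2) e] True show ?thesis by simp
  next
    case False
    hence "Y t < max (Y1 t) (Y2 t)" using Y by auto
    moreover have "continuous_on {a..b} Y" using Y c1 c2 by auto
    ultimately show ?thesis using right_bound_of_continuity[OF _ t] by blast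
  qed
  obtain d1 where d1: "d1 > 0"
    "\<forall>s. t < s \<and> s < t + d1 \<and> s \<le> b \<longrightarrow> Y1 s \<le> max (Y1 t) (Y2 t) - (m - e) * (s - t)"
    using loc[of Y1 Y2] by blast
  obtain d2 where d2: "d2 > 0"
    "\<forall>s. t < s \<and> s < t + d2 \<and> s \<le> b \<longrightarrow> Y2 s \<le> max (Y1 t) (Y2 t) - (m - e) * (s - t)"
    using loc[of Y2 Y1] by blast
  show ?thesis
    using d1 d2 by (intro exI[of _ "min d1 d2"]) auto
qed

lemma max_decrease_rate:
  fixes Y1 Y2 :: "real \<Rightarrow> real"
  assumes ab: "a \<le> b" and c1: "continuous_on {a..b} Y1" and c2: "continuous_on {a..b} Y2"
    and d1: "\<And>t. t \<in> {a..<b} \<Longrightarrow> Y1 t \<ge> Y2 t \<Longrightarrow>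
      \<exists>D. (Y1 has_real_derivative D) (at t within {a..b}) \<and> D \<le> -m"
    and d2: "\<And>t. t \<in> {a..<b} \<Longrightarrow> Y2 t \<ge> Y1 t \<Longrightarrow>
      \<exists>D. (Y2 has_real_derivative D) (at t within {a..b}) \<and> D \<le> -m"
  shows "max (Y1 b) (Y2 b) \<le> max (Y1 a) (Y2 a) - m * (b - a)"
proof (rule field_le_epsilon)
  fix e :: real assume e: "e > 0"
  define e' where "e' = e / (b - a + 1)"
  have e': "e' > 0" using e ab by (simp add: e'_def)
  define g where "g t = max (Y1 t) (Y2 t) + (m - e') * (t - a)" for t
  have "g b \<le> g a"
  proof (rule le_if_locally_right_nonincreasing[OF ab])
    show "continuous_on {a..b} g" unfolding g_def by (intro continuous_intros c1 c2)
  next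
    fix t assume t: "t \<in> {a..<b}"
    obtain d where d: "d > 0" "\<forall>s. t < s \<and> s < t + d \<and> s \<le> b \<longrightarrow>
        max (Y1 s) (Y2 s) \<le> max (Y1 t) (Y2 t) - (m - e') * (s - t)"
      using max_right_bound[OF c1 c2 d1 d2 t e'] by blast
    show "\<exists>d>0. \<forall>s. t < s \<and> s < t + d \<and> s \<le> b \<longrightarrow> g s \<le> g t"
    proof (intro exI[of _ d] conjI allI impI)
      fix s assume "t < s \<and> s < t + d \<and> s \<le> b"
      hence "max (Y1 s) (Y2 s) \<le> max (Y1 t) (Y2 t) - (m - e') * (s - t)" using d by auto
      thus "g s \<le> g t" unfolding g_def by (simp add: algebra_simps)
    qed (use d in auto)
  qed
  hence "max (Y1 b) (Y2 b) \<le> max (Y1 a) (Y2 a) - m * (b - a) + e' * (b - a)"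
    unfolding g_def by (simp add: algebra_simps)
  also have "e' * (b - a) \<le> e"
    using e ab by (simp add: e'_def field_simps)
  finally show "max (Y1 b) (Y2 b) \<le> max (Y1 a) (Y2 a) - m * (b - a) + e" by simp
qed

text \<open>Composing with \<open>\<psi>\<close> is only needed above the level \<open>c\<close>, where \<open>\<psi>\<close> is smooth; clipping
  the arguments at \<open>c/2\<close> makes both compositions continuous on the whole interval.\<close>

lemma has_real_derivative_comp_max_floor:
  fixes Vi Vj \<psi> \<psi>' :: "real \<Rightarrow> real"
  assumes ci: "continuous_on {a..b} Vi" and c: "c > 0"
    and lb: "\<forall>t\<in>{a..b}. max (Vi t) (Vj t) \<ge> c"
    and di: "\<And>t. t \<in> {a..<b} \<Longrightarrow> Vi t \<ge> Vj t \<Longrightarrow>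
      \<exists>D. (Vi has_real_derivative D) (at t within {a..b}) \<and> \<psi>' (Vi t) * D \<le> -m"
    and \<psi>_deriv: "\<And>y. y > c/2 \<Longrightarrow> (\<psi> has_real_derivative \<psi>' y) (at y)"
    and \<psi>_mono: "\<And>x y. c/2 \<le> x \<Longrightarrow> x < y \<Longrightarrow> \<psi> x < \<psi> y"
    and t: "t \<in> {a..<b}"
    and ge: "\<psi> (max (Vi t) (c/2)) \<ge> \<psi> (max (Vj t) (c/2))"
  shows "\<exists>D. ((\<lambda>t. \<psi> (max (Vi t) (c/2))) has_real_derivative D) (at t within {a..b}) \<and> D \<le> -m"
proof -
  have tab: "t \<in> {a..b}" using t by auto
  have "max (Vi t) (c/2) \<ge> max (Vj t) (c/2)"
    using \<psi>_mono[of "max (Vi t) (c/2)" "max (Vj t) (c/2)"] ge by (metis max.cobounded2 not_le)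
  moreover have "max (Vi t) (Vj t) \<ge> c" using lb tab by blast
  ultimately have V: "Vi t \<ge> Vj t" "Vi t \<ge> c" using c by (auto simp: max_def split: if_splits)
  obtain D where D: "(Vi has_real_derivative D) (at t within {a..b})" "\<psi>' (Vi t) * D \<le> -m"
    using di[OF t V(1)] by blast
  have chain: "((\<lambda>s. \<psi> (Vi s)) has_real_derivative \<psi>' (Vi t) * D) (at t within {a..b})"
    by (rule DERIV_chain2[OF \<psi>_deriv D(1)]) (use V c in auto)
  have "((\<lambda>s. Vi s) \<longlongrightarrow> Vi t) (at t within {a..b})"
    using ci tab unfolding continuous_on_def by blast
  hence "eventually (\<lambda>s. Vi s > c/2) (at t within {a..b})"
    using V c by (intro order_tendstoD(1)) auto
  then obtain d where d: "d > 0" "\<forall>s\<in>{a..b}. s \<noteq> t \<and> dist s t < d \<longrightarrow> Vi s > c/2"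
    unfolding eventually_at by blast
  have "((\<lambda>s. \<psi> (max (Vi s) (c/2))) has_real_derivative \<psi>' (Vi t) * D) (at t within {a..b})"
  proof (rule has_field_derivative_transform_within[OF chain d(1) tab])
    fix s assume "s \<in> {a..b}" "dist s t < d"
    hence "Vi s \<ge> c/2" using d V c by (cases "s = t") force+
    thus "\<psi> (Vi s) = \<psi> (max (Vi s) (c/2))" by simp
  qed
  thus ?thesis using D(2) by blast
qed

lemma comp_max_decrease_rate:
  fixes Va Vb \<psi> \<psi>' :: "real \<Rightarrow> real"
  assumes ab: "a \<le> b" and ca: "continuous_on {a..b} Va" and cb: "continuous_on {a..b} Vb"
    and c: "c > 0" and lb: "\<forall>t\<in>{a..b}. max (Va t) (Vb t) \<ge> c"
    and da: "\<And>t. t \<in> {a..<b} \<Longrightarrow> Va t \<ge> Vb t \<Longrightarrow>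
      \<exists>D. (Va has_real_derivative D) (at t within {a..b}) \<and> \<psi>' (Va t) * D \<le> -m"
    and db: "\<And>t. t \<in> {a..<b} \<Longrightarrow> Vb t \<ge> Va t \<Longrightarrow>
      \<exists>D. (Vb has_real_derivative D) (at t within {a..b}) \<and> \<psi>' (Vb t) * D \<le> -m"
    and \<psi>_deriv: "\<And>y. y > c/2 \<Longrightarrow> (\<psi> has_real_derivative \<psi>' y) (at y)"
    and \<psi>_cont: "continuous_on {c/2..} \<psi>"
    and \<psi>_mono: "\<And>x y. c/2 \<le> x \<Longrightarrow> x < y \<Longrightarrow> \<psi> x < \<psi> y"
  shows "\<psi> (max (Va b) (Vb b)) \<le> \<psi> (max (Va a) (Vb a)) - m * (b - a)"
proof -
  define Y1 where "Y1 t = \<psi> (max (Va t) (c/2))" for t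
  define Y2 where "Y2 t = \<psi> (max (Vb t) (c/2))" for t
  have max_\<psi>: "max (\<psi> x) (\<psi> y) = \<psi> (max x y)" if "c/2 \<le> x" "c/2 \<le> y" for x y
    using \<psi>_mono[of x y] \<psi>_mono[of y x] that by (cases x y rule: linorder_cases) (auto simp: max_def)
  have max_Y: "max (Y1 t) (Y2 t) = \<psi> (max (Va t) (Vb t))" if "t \<in> {a..b}" for t
  proof -
    have "c \<le> max (Va t) (Vb t)" using lb that by blast
    hence "max (max (Va t) (c/2)) (max (Vb t) (c/2)) = max (Va t) (Vb t)"
      using c by (auto simp: max_def split: if_splits)
    thus ?thesis unfolding Y1_def Y2_def by (subst max_\<psi>) auto
  qed
  have cY1: "continuous_on {a..b} Y1" unfolding Y1_def
    by (rule continuous_on_compose2[OF \<psi>_cont, of _ "\<lambda>t. max (Va t) (c/2)"])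
       (auto intro!: continuous_intros ca)
  have cY2: "continuous_on {a..b} Y2" unfolding Y2_def
    by (rule continuous_on_compose2[OF \<psi>_cont, of _ "\<lambda>t. max (Vb t) (c/2)"])
       (auto intro!: continuous_intros cb)
  have lb': "\<forall>t\<in>{a..b}. max (Vb t) (Va t) \<ge> c" using lb by (auto simp: max.commute)
  have "max (Y1 b) (Y2 b) \<le> max (Y1 a) (Y2 a) - m * (b - a)"
  proof (rule max_decrease_rate[OF ab cY1 cY2])
    fix t assume "t \<in> {a..<b}" "Y2 t \<le> Y1 t"
    thus "\<exists>D. (Y1 has_real_derivative D) (at t within {a..b}) \<and> D \<le> - m"
      using has_real_derivative_comp_max_floor[OF ca c lb da \<psi>_deriv \<psi>_mono]
      unfolding Y1_def Y2_def by blast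
  next
    fix t assume "t \<in> {a..<b}" "Y1 t \<le> Y2 t"
    thus "\<exists>D. (Y2 has_real_derivative D) (at t within {a..b}) \<and> D \<le> - m"
      using has_real_derivative_comp_max_floor[OF cb c lb' db \<psi>_deriv \<psi>_mono]
      unfolding Y1_def Y2_def by blast
  qed
  thus ?thesis using max_Y[of a] max_Y[of b] ab by auto
qed

lemma sublevel_forward_invariant:
  fixes V :: "real \<Rightarrow> real"
  assumes cont: "continuous_on {a..b} V" and ab: "a \<le> b" and Va: "V a \<le> c"
    and nonincr: "\<And>a' b'. a \<le> a' \<Longrightarrow> a' \<le> b' \<Longrightarrow> b' \<le> b \<Longrightarrow> \<forall>\<tau>\<in>{a'..b'}. c \<le> V \<tau> \<Longrightarrow> V b' \<le> V a'"
  shows "V b \<le> c"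
proof (rule ccontr)
  assume Vb: "\<not> V b \<le> c"
  define Z where "Z = {a..b} \<inter> V -` {..c}"
  have "compact Z"
    unfolding Z_def compact_eq_bounded_closed
    by (auto intro: continuous_closed_preimage[OF cont] bounded_subset[of "{a..b}"])
  moreover have "a \<in> Z" using ab Va by (auto simp: Z_def)
  ultimately obtain t0 where t0Z: "t0 \<in> Z" and t0max: "\<forall>z\<in>Z. z \<le> t0"
    using compact_attains_sup[of Z] by blast
  have t0: "a \<le> t0" "t0 < b" "V t0 \<le> c"
    using t0Z Vb by (auto simp: Z_def order.order_iff_strict)
  have above: "c \<le> V \<tau>" if "\<tau> \<in> {t0<..b}" for \<tau>
  proof (rule ccontr)
    assume "\<not> c \<le> V \<tau>"
    hence "\<tau> \<in> Z" using that t0 by (auto simp: Z_def)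
    thus False using t0max that by fastforce
  qed
  have "c \<le> V \<tau>" if "\<tau> \<in> {t0..b}" for \<tau>
    by (rule continuous_ge_on_closure[of "{t0<..b}"])
       (use cont t0 that above in \<open>auto intro: continuous_on_subset\<close>)
  hence "V b \<le> V t0" using nonincr t0 by auto
  thus False using Vb t0 by linarith
qed

section \<open>Fixed-time decay profiles\<close>

text \<open>\<open>decay_super ms s w \<tau>\<close> is the \<open>z\<close> with \<open>z^(1-s) = w^(1-s) + ms \<tau>\<close> (the superlinear phase,
  which brings any initial value below a fixed bound in fixed time); \<open>decay_fxt\<close> runs it up to
  \<open>t/2\<close> and then lets \<open>z^(1-r)\<close> decrease with slope \<open>mr\<close> (the sublinear phase, which reaches \<open>0\<close>
  in finite time).\<close>

definition decay_super :: "real \<Rightarrow> real \<Rightarrow> real \<Rightarrow> real \<Rightarrow> real" where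
  "decay_super ms s w \<tau> = w / (1 + ms * \<tau> * w powr (s - 1)) powr (1 / (s - 1))"

definition decay_fxt :: "real \<Rightarrow> real \<Rightarrow> real \<Rightarrow> real \<Rightarrow> real \<Rightarrow> real \<Rightarrow> real" where
  "decay_fxt mr ms r s w t = (max 0 (decay_super ms s w (t/2) powr (1 - r) - mr * t / 2)) powr (1 / (1 - r))"

lemma decay_super_nonneg: "w \<ge> 0 \<Longrightarrow> decay_super ms s w \<tau> \<ge> 0"
  unfolding decay_super_def by simp

lemma decay_super_denominator_ge_1:
  fixes w ms \<tau> s :: real
  assumes "w \<ge> 0" "ms \<ge> 0" "\<tau> \<ge> 0" "s > 1"
  shows "(1 + ms * \<tau> * w powr (s - 1)) powr (1 / (s - 1)) \<ge> 1"
proof -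
  have "1 \<le> 1 + ms * \<tau> * w powr (s - 1)" using assms by simp
  thus ?thesis using assms by (intro ge_one_powr_ge_zero) auto
qed

lemma decay_super_le:
  assumes "w \<ge> 0" "ms \<ge> 0" "\<tau> \<ge> 0" "s > 1"
  shows "decay_super ms s w \<tau> \<le> w"
  unfolding decay_super_def
  using decay_super_denominator_ge_1[OF assms] assms by (simp add: divide_le_eq mult_le_cancel_left1)

lemma decay_super_antimono:
  assumes "w \<ge> 0" "ms \<ge> 0" "0 \<le> \<tau>1" "\<tau>1 \<le> \<tau>2" "s > 1"
  shows "decay_super ms s w \<tau>2 \<le> decay_super ms s w \<tau>1"
proof -
  have "1 + ms * \<tau>1 * w powr (s - 1) \<le> 1 + ms * \<tau>2 * w powr (s - 1)"
    using assms by (intro add_left_mono mult_right_mono mult_left_mono) auto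
  hence "(1 + ms * \<tau>1 * w powr (s - 1)) powr (1 / (s - 1)) \<le> (1 + ms * \<tau>2 * w powr (s - 1)) powr (1 / (s - 1))"
    using assms by (intro powr_mono2) auto
  moreover have "(1 + ms * \<tau>1 * w powr (s - 1)) powr (1 / (s - 1)) \<ge> 1"
    using assms by (intro decay_super_denominator_ge_1) auto
  ultimately show ?thesis unfolding decay_super_def using assms
    by (intro divide_left_mono) (auto intro!: mult_pos_pos)
qed

lemma decay_super_le_1:
  assumes "w \<ge> 0" "ms * \<tau> \<ge> 1" "s > 1"
  shows "decay_super ms s w \<tau> \<le> 1"
proof (cases "w \<le> 1")
  case True
  have "ms \<ge> 0 \<and> \<tau> \<ge> 0 \<or> ms \<le> 0 \<and> \<tau> \<le> 0" using assms(2)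
    by (smt (verit) mult_nonneg_nonpos mult_nonpos_nonneg)
  hence "1 + ms * \<tau> * w powr (s - 1) \<ge> 1" using assms
    by (auto intro!: mult_nonneg_nonneg)
  hence "(1 + ms * \<tau> * w powr (s - 1)) powr (1 / (s - 1)) \<ge> 1"
    using assms by (intro ge_one_powr_ge_zero) auto
  hence "decay_super ms s w \<tau> \<le> w / 1" unfolding decay_super_def using assms by (intro divide_left_mono) auto
  thus ?thesis using True by simp
next
  case False
  hence w: "w > 1" by simp
  have "ms * \<tau> * w powr (s - 1) \<ge> 1 * w powr (s - 1)"
    using assms by (intro mult_right_mono) auto
  hence "(w powr (s - 1)) powr (1 / (s - 1)) < (1 + ms * \<tau> * w powr (s - 1)) powr (1 / (s - 1))"
    using assms by (intro powr_less_mono2) auto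
  moreover have "(w powr (s - 1)) powr (1 / (s - 1)) = w" using w assms by (simp add: powr_powr)
  ultimately show ?thesis using w unfolding decay_super_def by (simp add: divide_le_eq)
qed

lemma decay_super_eq:
  assumes w: "w > 0" and s: "s > 1" and ms: "ms \<ge> 0" and \<tau>: "\<tau> \<ge> 0"
  shows "decay_super ms s w \<tau> = (w powr (1 - s) + ms * \<tau>) powr (- (1 / (s - 1)))"
proof -
  have "w powr (1-s) * w powr (s-1) = 1" using w by (simp add: powr_add[symmetric])
  hence split: "w powr (1-s) + ms * \<tau> = w powr (1-s) * (1 + ms * \<tau> * w powr (s - 1))"
    by (simp add: algebra_simps)
  have Q: "1 + ms * \<tau> * w powr (s - 1) > 0" using ms \<tau> by (simp add: add_pos_nonneg)
  have ex: "(1-s) * (- (1 / (s - 1))) = 1" using s by (simp add: field_simps)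
  have "(w powr (1 - s) + ms * \<tau>) powr (- (1 / (s - 1)))
      = (w powr (1-s)) powr (- (1 / (s - 1))) * (1 + ms * \<tau> * w powr (s - 1)) powr (- (1 / (s - 1)))"
    unfolding split using w Q by (simp add: powr_mult)
  also have "(w powr (1-s)) powr (- (1 / (s - 1))) = w"
    using w by (simp only: powr_powr ex powr_one_gt_zero_iff)
  finally show ?thesis unfolding decay_super_def using Q by (simp add: powr_minus_divide)
qed

lemma decay_super_mono:
  assumes "0 \<le> w1" "w1 \<le> w2" "s > 1" "ms \<ge> 0" "\<tau> \<ge> 0"
  shows "decay_super ms s w1 \<tau> \<le> decay_super ms s w2 \<tau>"
proof (cases "w1 = 0")
  case True thus ?thesis using decay_super_nonneg[of w2] assms by (simp add: decay_super_def)
next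
  case False
  hence w1: "w1 > 0" using assms by simp
  have "w2 powr (1 - s) \<le> w1 powr (1 - s)" using w1 assms by (intro powr_mono2') auto
  moreover have "0 < w2 powr (1 - s) + ms * \<tau>" using w1 assms by (intro add_pos_nonneg) auto
  ultimately have "(w1 powr (1 - s) + ms * \<tau>) powr (- (1 / (s - 1)))
      \<le> (w2 powr (1 - s) + ms * \<tau>) powr (- (1 / (s - 1)))"
    using assms by (intro powr_mono2') auto
  thus ?thesis using w1 assms by (simp add: decay_super_eq)
qed

lemma decay_fxt_nonneg: "decay_fxt mr ms r s w t \<ge> 0"
  by (simp add: decay_fxt_def)

lemma decay_fxt_0:
  assumes "w \<ge> 0" "r < 1"
  shows "decay_fxt mr ms r s w 0 = w"
  using assms by (simp add: decay_fxt_def decay_super_def powr_powr)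

lemma decay_fxt_antimono:
  assumes "w \<ge> 0" "ms \<ge> 0" "mr \<ge> 0" "0 \<le> t1" "t1 \<le> t2" "s > 1" "r < 1"
  shows "decay_fxt mr ms r s w t2 \<le> decay_fxt mr ms r s w t1"
proof -
  have "decay_super ms s w (t2/2) \<le> decay_super ms s w (t1/2)"
    using assms by (intro decay_super_antimono) auto
  hence "decay_super ms s w (t2/2) powr (1 - r) \<le> decay_super ms s w (t1/2) powr (1 - r)"
    using assms decay_super_nonneg[OF assms(1)] by (intro powr_mono2) auto
  moreover have "mr * t1 / 2 \<le> mr * t2 / 2" using assms by (simp add: mult_left_mono)
  ultimately show ?thesis
    unfolding decay_fxt_def using assms by (intro powr_mono2) auto
qed

lemma decay_fxt_mono:
  assumes "0 \<le> w1" "w1 \<le> w2" "s > 1" "ms \<ge> 0" "t \<ge> 0" "r < 1"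
  shows "decay_fxt mr ms r s w1 t \<le> decay_fxt mr ms r s w2 t"
proof -
  have "decay_super ms s w1 (t/2) \<le> decay_super ms s w2 (t/2)"
    using assms by (intro decay_super_mono) auto
  hence "decay_super ms s w1 (t/2) powr (1 - r) \<le> decay_super ms s w2 (t/2) powr (1 - r)"
    using assms decay_super_nonneg[OF assms(1)] by (intro powr_mono2) auto
  thus ?thesis unfolding decay_fxt_def using assms by (intro powr_mono2) auto
qed

lemma decay_fxt_vanishes:
  assumes w: "w \<ge> 0" and mr: "mr > 0" and ms: "ms > 0" and r: "0 < r" "r < 1" and s: "s > 1"
    and t: "t \<ge> min (2 * w powr (1 - r) / mr) (2 * max (1/ms) (1/mr))"
  shows "decay_fxt mr ms r s w t = 0"
proof -
  have t0: "t \<ge> 0" using t mr ms by (smt (verit) divide_nonneg_pos max.cobounded2 powr_ge_zero)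
  have "decay_super ms s w (t/2) powr (1 - r) \<le> mr * t / 2"
  proof (cases "t \<ge> 2 * w powr (1 - r) / mr")
    case True
    have "decay_super ms s w (t/2) powr (1 - r) \<le> w powr (1 - r)"
      using decay_super_le[of w ms "t/2" s] decay_super_nonneg[OF w] w ms t0 s r
      by (intro powr_mono2) auto
    also have "\<dots> \<le> mr * t / 2" using True mr by (simp add: field_simps)
    finally show ?thesis .
  next
    case False
    hence "t \<ge> 2 / ms" "t \<ge> 2 / mr" using t by auto
    hence m1: "ms * (t/2) \<ge> 1" "mr * t / 2 \<ge> 1" using ms mr by (auto simp: field_simps)
    have "decay_super ms s w (t/2) powr (1 - r) \<le> 1 powr (1 - r)"
      using decay_super_le_1[OF w m1(1) s] decay_super_nonneg[OF w] r by (intro powr_mono2) auto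
    thus ?thesis using m1 by simp
  qed
  thus ?thesis by (simp add: decay_fxt_def)
qed

lemma continuous_on_decay_fxt:
  assumes c: "c \<ge> 0" and ms: "ms \<ge> 0" and s: "s > 1" and r: "r < 1"
  shows "continuous_on ({0..} \<times> {0..}) (\<lambda>z. decay_fxt mr ms r s (c * fst z) (snd z))"
  unfolding decay_fxt_def decay_super_def
  apply (intro continuous_on_powr' continuous_intros)
  using c ms s r apply (auto simp: mult_nonneg_nonneg)
  by (smt (verit) c divide_nonneg_nonneg ms mult_nonneg_nonneg powr_ge_zero)

lemma decay_fxt_settling_time:
  assumes mr: "mr > 0" and ms: "ms > 0" and r: "0 < r" "r < 1" and s: "s > 1" and c: "c \<ge> 0"
  shows "\<exists>T. continuous_on {0..} T \<and> (\<forall>w\<ge>0. 0 \<le> T w) \<and> bounded (T ` {0..}) \<and> T 0 = 0 \<and>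
    (\<forall>w\<ge>0. \<forall>t\<ge>T w. decay_fxt mr ms r s (c * w) t = 0)"
proof -
  define T where "T w = min (2 * (c * w) powr (1 - r) / mr) (2 * max (1/ms) (1/mr))" for w
  have T_max: "2 * max (1/ms) (1/mr) > 0" using ms by (simp add: max.strict_coboundedI1)
  show ?thesis
  proof (intro exI[of _ T] conjI allI impI)
    show "continuous_on {0..} T" unfolding T_def
      using c r mr by (intro continuous_on_powr' continuous_intros) auto
    show "bounded (T ` {0..})"
      unfolding bounded_iff T_def using mr T_max c by (intro exI[of _ "2 * max (1/ms) (1/mr)"]) auto
    show "T 0 = 0" unfolding T_def using T_max r by simp
  next
    fix w :: real assume "w \<ge> 0"
    thus "0 \<le> T w" unfolding T_def using mr T_max c by auto
  next
    fix w t :: real assume "w \<ge> 0" "T w \<le> t"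
    thus "decay_fxt mr ms r s (c * w) t = 0"
      using decay_fxt_vanishes[of "c * w" mr ms r s t] mr ms r s c by (simp add: T_def)
  qed
qed

lemma classKL_FxT_decay_fxt:
  assumes mr: "mr > 0" and ms: "ms > 0" and r: "0 < r" "r < 1" and s: "s > 1"
    and c1: "c1 > 0" and c2: "c2 > 0"
  shows "classKL_FxT (\<lambda>w t. c1 * decay_fxt mr ms r s (c2 * w) t)"
  unfolding classKL_FxT_def
proof (intro conjI allI impI)
  show "continuous_on ({0..} \<times> {0..}) (\<lambda>z. c1 * decay_fxt mr ms r s (c2 * fst z) (snd z))"
    using continuous_on_decay_fxt[of c2 ms s r mr] c2 ms s r by (intro continuous_on_mult_left) auto
next
  fix w t :: real
  show "0 \<le> c1 * decay_fxt mr ms r s (c2 * w) t" using c1 decay_fxt_nonneg by simp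
next
  have at_0: "c1 * decay_fxt mr ms r s (c2 * w) 0 = c1 * c2 * w" if "w \<ge> 0" for w
    using decay_fxt_0[of "c2 * w" r mr ms s] that c2 r by simp
  show "classK (\<lambda>w. c1 * decay_fxt mr ms r s (c2 * w) 0)"
    unfolding classK_def
  proof (intro conjI allI impI)
    have "continuous_on {0..} (\<lambda>w::real. c1 * c2 * w)" by (intro continuous_intros)
    thus "continuous_on {0..} (\<lambda>w. c1 * decay_fxt mr ms r s (c2 * w) 0)"
      by (rule continuous_on_eq) (metis atLeast_iff at_0)
    show "strict_mono_on {0..} (\<lambda>w. c1 * decay_fxt mr ms r s (c2 * w) 0)"
      by (rule strict_mono_onI) (use at_0 c1 c2 in auto)
  qed (use at_0 at_0[of 0] c1 c2 in auto)
next
  fix w :: real assume w: "w \<ge> 0"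
  have "continuous_on {0..} (\<lambda>t. (\<lambda>z. decay_fxt mr ms r s (c2 * fst z) (snd z)) (w, t))"
    by (rule continuous_on_compose2[OF continuous_on_decay_fxt[of c2 ms s r mr]])
       (use c2 ms s r w in \<open>auto intro!: continuous_intros\<close>)
  thus "continuous_on {0..} (\<lambda>t. c1 * decay_fxt mr ms r s (c2 * w) t)"
    by (intro continuous_on_mult_left) simp
  fix a b :: real assume "0 \<le> a" "a \<le> b"
  thus "c1 * decay_fxt mr ms r s (c2 * w) b \<le> c1 * decay_fxt mr ms r s (c2 * w) a"
    using decay_fxt_antimono[of "c2 * w" ms mr a b s r] w c1 c2 ms mr s r by (intro mult_left_mono) auto
next
  show "\<exists>T. continuous_on {0..} T \<and> (\<forall>r\<ge>0. 0 \<le> T r) \<and> bounded (T ` {0..}) \<and> T 0 = 0 \<and>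
        (\<forall>w\<ge>0. \<forall>t\<ge>T w. c1 * decay_fxt mr ms r s (c2 * w) t = 0)"
    using decay_fxt_settling_time[OF mr ms r s less_imp_le[OF c2]] by auto
qed

lemma classK_scaled_powr:
  fixes A B e :: real
  assumes "A > 0" "B > 0" "e > 0"
  shows "classK (\<lambda>v. A * (B * v) powr e)"
  unfolding classK_def
proof (intro conjI allI impI)
  show "continuous_on {0..} (\<lambda>v. A * (B * v) powr e)"
    using assms by (intro continuous_on_powr' continuous_intros) auto
  show "strict_mono_on {0..} (\<lambda>v. A * (B * v) powr e)"
    by (rule strict_mono_onI) (use assms in \<open>auto intro!: powr_less_mono2\<close>)
qed (use assms in auto)

section \<open>Two Lyapunov functions with a fixed-time decay rate\<close>

definition fxt_rate :: "real \<Rightarrow> real \<Rightarrow> real \<Rightarrow> real \<Rightarrow> real \<Rightarrow> real" where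
  "fxt_rate k r s P V = - k * (V powr ((1+r)/2) + V powr ((1+s)/2)) + P * V powr (1/2)"

lemma gain_term_le:
  fixes V P k r \<rho> :: real
  assumes V: "V \<ge> \<rho>^2" and \<rho>: "\<rho> > 0" and k: "k \<ge> 0" and r: "r > 0" and P: "P \<le> (k/2) * \<rho> powr r"
  shows "P * V powr (-r/2) \<le> k/2"
proof (cases "P \<le> 0")
  case True
  hence "P * V powr (-r/2) \<le> 0" by (simp add: mult_nonpos_nonneg)
  thus ?thesis using k by linarith
next
  case False
  have "V powr (-r/2) \<le> (\<rho> powr 2) powr (-r/2)"
    using V \<rho> r by (intro powr_mono2') auto
  also have "\<dots> = \<rho> powr (-r)" by (simp add: powr_powr)
  finally have "P * V powr (-r/2) \<le> P * \<rho> powr (-r)" using False by (intro mult_left_mono) auto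
  also have "\<dots> \<le> (k/2) * \<rho> powr r * \<rho> powr (-r)" using P by (intro mult_right_mono) auto
  also have "\<dots> = k/2" using \<rho> by (simp add: powr_add[symmetric])
  finally show ?thesis .
qed

lemma fxt_rate_sublinear_phase:
  fixes V D k r s P \<rho> :: real
  assumes V: "V \<ge> \<rho>^2" and \<rho>: "\<rho> > 0" and k: "k > 0" and r: "0 < r" "r < 1"
    and D: "D \<le> fxt_rate k r s P V" and P: "P \<le> (k/2) * \<rho> powr r"
  shows "((1-r)/2 * V powr ((1-r)/2 - 1)) * D \<le> -((1-r)*k/4)"
proof -
  have Vp: "V > 0" by (rule less_le_trans[OF zero_less_power[OF \<rho>] V])
  define X where "X = V powr ((1-r)/2 - 1)"
  have X: "X > 0" using Vp by (simp add: X_def)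
  have "(1-r)/2 - 1 + (1+r)/2 = (0::real)" "(1-r)/2 - 1 + 1/2 = (-r/2::real)"
    by (simp_all add: field_simps)
  hence e1: "X * V powr ((1+r)/2) = 1" and e2: "X * V powr (1/2) = V powr (-r/2)"
    using Vp by (simp_all add: X_def powr_add[symmetric])
  have "X * D \<le> X * fxt_rate k r s P V"
    using D X by (intro mult_left_mono) auto
  also have "\<dots> = -k - k * (X * V powr ((1+s)/2)) + P * V powr (-r/2)"
    using e1 e2 by (simp add: fxt_rate_def algebra_simps)
  also have "\<dots> \<le> -k + k/2"
  proof -
    have "P * V powr (-r/2) \<le> k/2" using gain_term_le[OF V \<rho> _ r(1) P] k by simp
    moreover have "0 \<le> k * (X * V powr ((1+s)/2))" using k X by simp
    ultimately show ?thesis by linarith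
  qed
  finally have "X * D \<le> -k/2" by simp
  hence "(1-r)/2 * (X * D) \<le> (1-r)/2 * (-k/2)" using r by (intro mult_left_mono) auto
  thus ?thesis by (simp add: X_def algebra_simps)
qed

lemma fxt_rate_superlinear_phase:
  fixes V D k r s P \<rho> :: real
  assumes V: "V \<ge> \<rho>^2" and \<rho>: "\<rho> > 0" and k: "k > 0" and r: "0 < r" "r < 1" and s: "s > 1"
    and D: "D \<le> fxt_rate k r s P V" and P: "P \<le> (k/2) * \<rho> powr r"
  shows "(- ((1-s)/2 * V powr ((1-s)/2 - 1))) * D \<le> -((s-1)*k/2)"
proof -
  have Vp: "V > 0" by (rule less_le_trans[OF zero_less_power[OF \<rho>] V])
  define X where "X = V powr ((1-s)/2 - 1)"
  have X: "X > 0" using Vp by (simp add: X_def)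
  have "(1-s)/2 - 1 + (1+r)/2 = ((r-s)/2::real)" "(1-s)/2 - 1 + (1+s)/2 = (0::real)"
    "(1-s)/2 - 1 + 1/2 = (-r/2 + (r-s)/2::real)"
    by (simp_all add: field_simps)
  hence e1: "X * V powr ((1+r)/2) = V powr ((r-s)/2)" and e2: "X * V powr ((1+s)/2) = 1"
    and e3: "X * V powr (1/2) = V powr (-r/2) * V powr ((r-s)/2)"
    using Vp by (simp_all only: X_def powr_add[symmetric]) simp_all
  have "X * D \<le> X * fxt_rate k r s P V"
    using D X by (intro mult_left_mono) auto
  also have "\<dots> = -k * (X * V powr ((1+r)/2)) - k * (X * V powr ((1+s)/2)) + P * (X * V powr (1/2))"
    by (simp add: fxt_rate_def algebra_simps)
  also have "\<dots> = -k * V powr ((r-s)/2) - k + (P * V powr (-r/2)) * V powr ((r-s)/2)"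
    using e1 e2 e3 by simp
  also have "\<dots> \<le> -k * V powr ((r-s)/2) - k + (k/2) * V powr ((r-s)/2)"
    using gain_term_le[OF V \<rho> _ r(1) P] k by (intro add_left_mono mult_right_mono) auto
  also have "\<dots> \<le> -k" using k by (simp add: mult_nonneg_nonneg)
  finally have "X * D \<le> -k" .
  hence "(s-1)/2 * (X * D) \<le> (s-1)/2 * (-k)" using s by (intro mult_left_mono) auto
  moreover have "(- ((1-s)/2 * X)) * D = (s-1)/2 * (X * D)" by (simp add: field_simps)
  ultimately show ?thesis unfolding X_def by simp
qed

lemma two_phase_bound:
  fixes v0 v1 v2 mr ms r s t :: real
  assumes v: "v0 > 0" "v1 > 0" "v2 > 0" and ms: "ms \<ge> 0" and s: "s > 1" and r: "0 < r" "r < 1"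
    and t: "t \<ge> 0"
    and super: "v0 powr ((1-s)/2) + ms * (t/2) \<le> v1 powr ((1-s)/2)"
    and sub: "v2 powr ((1-r)/2) \<le> v1 powr ((1-r)/2) - mr * (t/2)"
  shows "sqrt v2 \<le> decay_fxt mr ms r s (sqrt v0) t"
proof -
  have half: "v powr (e/2) = sqrt v powr e" if "v \<ge> 0" for v e :: real
    using that by (simp add: powr_half_sqrt[symmetric] powr_powr)
  define w0 w1 w2 where "w0 = sqrt v0" and "w1 = sqrt v1" and "w2 = sqrt v2"
  have w: "w0 > 0" "w1 > 0" "w2 > 0" using v by (auto simp: w0_def w1_def w2_def)
  have super': "w0 powr (1-s) + ms * (t/2) \<le> w1 powr (1-s)"
    using super v by (simp add: half w0_def w1_def)
  have sub': "w2 powr (1-r) \<le> w1 powr (1-r) - mr * (t/2)"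
    using sub v by (simp add: half w2_def w1_def)
  have s1: "(1 - s) * (1 / (1 - s)) = 1" using s by simp
  have "w1 = (w1 powr (1-s)) powr (1/(1-s))"
    using w s1 by (simp add: powr_powr)
  also have "\<dots> \<le> (w0 powr (1-s) + ms * (t/2)) powr (1/(1-s))"
  proof (rule powr_mono2'[OF _ _ super'])
    show "1/(1-s) \<le> 0" using s by simp
    show "0 < w0 powr (1-s) + ms * (t/2)" using w ms t by (simp add: add_pos_nonneg)
  qed
  also have "1/(1-s) = - (1/(s-1))" using s by (simp add: field_simps)
  also have "(w0 powr (1-s) + ms * (t/2)) powr (- (1/(s-1))) = decay_super ms s w0 (t/2)"
    using w s ms t by (simp add: decay_super_eq)
  finally have "w1 \<le> decay_super ms s w0 (t/2)" .
  hence "w1 powr (1-r) \<le> decay_super ms s w0 (t/2) powr (1-r)"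
    using w r by (intro powr_mono2) auto
  hence "w2 powr (1-r) \<le> max 0 (decay_super ms s w0 (t/2) powr (1 - r) - mr * t / 2)"
    using sub' by auto
  hence "(w2 powr (1-r)) powr (1/(1-r))
      \<le> (max 0 (decay_super ms s w0 (t/2) powr (1 - r) - mr * t / 2)) powr (1/(1-r))"
    using r by (intro powr_mono2) auto
  moreover have "(w2 powr (1-r)) powr (1/(1-r)) = w2" using w r by (simp add: powr_powr)
  ultimately show ?thesis by (simp add: decay_fxt_def w0_def w2_def)
qed

locale fxt_lyapunov_pair =
  fixes V1 V2 V1' V2' :: "real \<Rightarrow> real" and k r s P \<rho> :: real
  assumes V1_deriv: "\<And>t. t \<ge> 0 \<Longrightarrow> (V1 has_real_derivative V1' t) (at t within {0..})"
    and V2_deriv: "\<And>t. t \<ge> 0 \<Longrightarrow> (V2 has_real_derivative V2' t) (at t within {0..})"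
    and k_pos: "k > 0" and r: "0 < r" "r < 1" and s: "s > 1" and \<rho>_pos: "\<rho> > 0"
    and gain_le: "P \<le> (k/2) * \<rho> powr r"
    and V1_decay: "\<And>t. t \<ge> 0 \<Longrightarrow> V2 t \<le> V1 t \<Longrightarrow> \<rho>^2 \<le> V1 t \<Longrightarrow> V1' t \<le> fxt_rate k r s P (V1 t)"
    and V2_decay: "\<And>t. t \<ge> 0 \<Longrightarrow> V1 t \<le> V2 t \<Longrightarrow> \<rho>^2 \<le> V2 t \<Longrightarrow> V2' t \<le> fxt_rate k r s P (V2 t)"
begin

lemma \<rho>_sq_pos: "0 < \<rho>^2"
  using \<rho>_pos by simp

definition Vmax :: "real \<Rightarrow> real" where
  "Vmax t = max (V1 t) (V2 t)"

lemma continuous_on_V1: "continuous_on {0..} V1"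
  and continuous_on_V2: "continuous_on {0..} V2"
  using V1_deriv V2_deriv
  by (auto simp: continuous_on_eq_continuous_within intro: DERIV_continuous)

lemma continuous_on_Vmax: "continuous_on {0..} Vmax"
  unfolding Vmax_def[abs_def] by (intro continuous_intros continuous_on_V1 continuous_on_V2)

lemma comp_Vmax_decrease_rate:
  fixes \<psi> \<psi>' :: "real \<Rightarrow> real"
  assumes \<psi>_rate: "\<And>V D. \<rho>^2 \<le> V \<Longrightarrow> D \<le> fxt_rate k r s P V \<Longrightarrow> \<psi>' V * D \<le> -m"
    and \<psi>_deriv: "\<And>y. y > \<rho>^2/2 \<Longrightarrow> (\<psi> has_real_derivative \<psi>' y) (at y)"
    and \<psi>_cont: "continuous_on {\<rho>^2/2..} \<psi>"
    and \<psi>_mono: "\<And>x y. \<rho>^2/2 \<le> x \<Longrightarrow> x < y \<Longrightarrow> \<psi> x < \<psi> y"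
    and ab: "0 \<le> a" "a \<le> b" and above: "\<forall>t\<in>{a..b}. \<rho>^2 \<le> Vmax t"
  shows "\<psi> (Vmax b) \<le> \<psi> (Vmax a) - m * (b - a)"
  unfolding Vmax_def
proof (rule comp_max_decrease_rate[where c="\<rho>^2", OF ab(2) _ _ _ _ _ _ \<psi>_deriv \<psi>_cont \<psi>_mono])
  show "continuous_on {a..b} V1" "continuous_on {a..b} V2"
    using ab by (auto intro: continuous_on_subset[OF continuous_on_V1] continuous_on_subset[OF continuous_on_V2])
  show "\<rho>^2 > 0" using \<rho>_pos by simp
  show "\<forall>t\<in>{a..b}. \<rho>^2 \<le> max (V1 t) (V2 t)" using above by (simp add: Vmax_def)
next
  fix t assume t: "t \<in> {a..<b}" "V2 t \<le> V1 t"
  hence "\<rho>^2 \<le> V1 t" using above by (force simp: Vmax_def)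
  hence "\<psi>' (V1 t) * V1' t \<le> -m" using t ab by (intro \<psi>_rate V1_decay) auto
  moreover have "(V1 has_real_derivative V1' t) (at t within {a..b})"
    by (rule DERIV_subset[OF V1_deriv]) (use t ab in auto)
  ultimately show "\<exists>D. (V1 has_real_derivative D) (at t within {a..b}) \<and> \<psi>' (V1 t) * D \<le> - m" by blast
next
  fix t assume t: "t \<in> {a..<b}" "V1 t \<le> V2 t"
  hence "\<rho>^2 \<le> V2 t" using above by (force simp: Vmax_def)
  hence "\<psi>' (V2 t) * V2' t \<le> -m" using t ab by (intro \<psi>_rate V2_decay) auto
  moreover have "(V2 has_real_derivative V2' t) (at t within {a..b})"
    by (rule DERIV_subset[OF V2_deriv]) (use t ab in auto)
  ultimately show "\<exists>D. (V2 has_real_derivative D) (at t within {a..b}) \<and> \<psi>' (V2 t) * D \<le> - m" by blast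
qed

lemma sublinear_phase:
  assumes "0 \<le> a" "a \<le> b" "\<forall>t\<in>{a..b}. \<rho>^2 \<le> Vmax t"
  shows "Vmax b powr ((1-r)/2) \<le> Vmax a powr ((1-r)/2) - ((1-r)*k/4) * (b - a)"
proof (rule comp_Vmax_decrease_rate[OF _ _ _ _ assms])
  fix V D assume "\<rho>^2 \<le> V" "D \<le> fxt_rate k r s P V"
  thus "(1-r)/2 * V powr ((1-r)/2 - 1) * D \<le> - ((1-r) * k / 4)"
    by (rule fxt_rate_sublinear_phase[OF _ \<rho>_pos k_pos r _ gain_le])
next
  fix y :: real assume "y > \<rho>^2/2"
  hence "y > 0" using \<rho>_sq_pos by linarith
  thus "((\<lambda>y. y powr ((1-r)/2)) has_real_derivative (1-r)/2 * y powr ((1-r)/2 - 1)) (at y)"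
    by (rule has_real_derivative_powr)
next
  show "continuous_on {\<rho>^2/2..} (\<lambda>y. y powr ((1-r)/2))"
    using \<rho>_pos by (intro continuous_on_powr' continuous_intros) auto
next
  fix x y :: real assume xy: "\<rho>^2/2 \<le> x" "x < y"
  hence "0 \<le> x" using \<rho>_sq_pos by linarith
  thus "x powr ((1-r)/2) < y powr ((1-r)/2)"
    using xy r by (intro powr_less_mono2) auto
qed

lemma superlinear_phase:
  assumes "0 \<le> a" "a \<le> b" "\<forall>t\<in>{a..b}. \<rho>^2 \<le> Vmax t"
  shows "Vmax a powr ((1-s)/2) + ((s-1)*k/2) * (b - a) \<le> Vmax b powr ((1-s)/2)"
proof -
  have "- (Vmax b powr ((1-s)/2)) \<le> - (Vmax a powr ((1-s)/2)) - ((s-1)*k/2) * (b - a)"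
  proof (rule comp_Vmax_decrease_rate[OF _ _ _ _ assms])
    fix V D assume "\<rho>^2 \<le> V" "D \<le> fxt_rate k r s P V"
    thus "- ((1-s)/2 * V powr ((1-s)/2 - 1)) * D \<le> - ((s-1) * k / 2)"
      by (rule fxt_rate_superlinear_phase[OF _ \<rho>_pos k_pos r s _ gain_le])
  next
    fix y :: real assume "y > \<rho>^2/2"
    hence "y > 0" using \<rho>_sq_pos by linarith
    thus "((\<lambda>y. - (y powr ((1-s)/2))) has_real_derivative - ((1-s)/2 * y powr ((1-s)/2 - 1))) (at y)"
      by (intro DERIV_minus has_real_derivative_powr)
  next
    show "continuous_on {\<rho>^2/2..} (\<lambda>y. - (y powr ((1-s)/2)))"
      using \<rho>_pos by (intro continuous_on_minus continuous_on_powr' continuous_intros) auto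
  next
    fix x y :: real assume xy: "\<rho>^2/2 \<le> x" "x < y"
    hence "0 < x" using \<rho>_sq_pos by linarith
    thus "- (x powr ((1-s)/2)) < - (y powr ((1-s)/2))"
      using xy s by (simp add: powr_less_mono2_neg)
  qed
  thus ?thesis by simp
qed

lemma Vmax_nonincreasing_above:
  assumes "0 \<le> a" "a \<le> b" "\<forall>t\<in>{a..b}. \<rho>^2 \<le> Vmax t"
  shows "Vmax b \<le> Vmax a"
proof (rule ccontr)
  assume "\<not> Vmax b \<le> Vmax a"
  moreover have "0 \<le> Vmax a" using assms \<rho>_sq_pos by (meson atLeastAtMost_iff less_le_trans order.refl less_imp_le)
  ultimately have "Vmax a powr ((1-r)/2) < Vmax b powr ((1-r)/2)"
    using r by (intro powr_less_mono2) auto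
  moreover have "((1-r)*k/4) * (b - a) \<ge> 0" using r k_pos assms by simp
  ultimately show False using sublinear_phase[OF assms] by linarith
qed

lemma Vmax_above_before:
  assumes "0 \<le> \<tau>" "\<tau> \<le> t" "\<rho>^2 < Vmax t"
  shows "\<rho>^2 < Vmax \<tau>"
proof (rule ccontr)
  assume "\<not> \<rho>^2 < Vmax \<tau>"
  have "Vmax t \<le> \<rho>^2"
  proof (rule sublevel_forward_invariant[of \<tau> t])
    show "continuous_on {\<tau>..t} Vmax"
      using assms by (auto intro: continuous_on_subset[OF continuous_on_Vmax])
  qed (use assms \<open>\<not> \<rho>^2 < Vmax \<tau>\<close> Vmax_nonincreasing_above in auto)
  thus False using assms by simp
qed

theorem sqrt_Vmax_le:
  assumes t: "t \<ge> 0"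
  shows "sqrt (Vmax t) \<le> max \<rho> (decay_fxt ((1-r)*k/4) ((s-1)*k/2) r s (sqrt (Vmax 0)) t)"
proof (cases "Vmax t \<le> \<rho>^2")
  case True
  hence "sqrt (Vmax t) \<le> \<rho>" using \<rho>_pos real_sqrt_le_mono by fastforce
  thus ?thesis by simp
next
  case False
  hence above: "\<rho>^2 < Vmax \<tau>" if "\<tau> \<in> {0..t}" for \<tau>
    using Vmax_above_before[of \<tau> t] that False by auto
  have pos: "0 < Vmax \<tau>" if "\<tau> \<in> {0..t}" for \<tau>
    using above[OF that] \<rho>_sq_pos by linarith
  have above_le: "\<forall>\<tau>\<in>{a..b}. \<rho>^2 \<le> Vmax \<tau>" if "0 \<le> a" "b \<le> t" for a b
    using above that by (auto intro: less_imp_le)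
  have "Vmax 0 powr ((1-s)/2) + ((s-1)*k/2) * (t/2) \<le> Vmax (t/2) powr ((1-s)/2)"
    using superlinear_phase[of 0 "t/2"] above_le[of 0 "t/2"] t by simp
  moreover have "Vmax t powr ((1-r)/2) \<le> Vmax (t/2) powr ((1-r)/2) - ((1-r)*k/4) * (t/2)"
    using sublinear_phase[of "t/2" t] above_le[of "t/2" t] t by simp
  ultimately have "sqrt (Vmax t) \<le> decay_fxt ((1-r)*k/4) ((s-1)*k/2) r s (sqrt (Vmax 0)) t"
    using pos t s r k_pos by (intro two_phase_bound) auto
  thus ?thesis by simp
qed

end

lemma has_vector_derivative_compose_has_derivative:
  assumes f: "(f has_vector_derivative v) (at t within S)" and g: "(g has_derivative g') (at (f t))"
  shows "((\<lambda>s. g (f s)) has_vector_derivative g' v) (at t within S)"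
proof -
  have "((\<lambda>s. g (f s)) has_derivative (\<lambda>h. g' (h *\<^sub>R v))) (at t within S)"
    using has_derivative_compose[OF f[unfolded has_vector_derivative_def] g] .
  moreover have "g' (h *\<^sub>R v) = h *\<^sub>R g' v" for h
    using linear_scale[OF has_derivative_linear[OF g]] .
  ultimately show ?thesis by (simp add: has_vector_derivative_def)
qed

lemma norm_difference_quotient_tendsto:
  fixes f :: "real \<Rightarrow> 'a::real_normed_vector"
  assumes "(f has_vector_derivative F) (at_right t)"
  shows "((\<lambda>y. norm (f y - f t) / (y - t)) \<longlongrightarrow> norm F) (at_right t)"
proof -
  have "((\<lambda>y. (1 / norm (y - t)) *\<^sub>R (f y - (f t + (y - t) *\<^sub>R F)) + F) \<longlongrightarrow> 0 + F) (at_right t)"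
    using assms unfolding has_vector_derivative_def has_derivative_within
    by (intro tendsto_add tendsto_const) auto
  moreover have "eventually (\<lambda>y. (1 / norm (y - t)) *\<^sub>R (f y - (f t + (y - t) *\<^sub>R F)) + F
      = (1 / (y - t)) *\<^sub>R (f y - f t)) (at_right t)"
    using eventually_at_right_less[of t]
  proof eventually_elim
    case (elim y)
    have "(1 / norm (y - t)) *\<^sub>R (f y - (f t + (y - t) *\<^sub>R F))
        = (1 / (y - t)) *\<^sub>R (f y - f t) - (1 / (y - t)) *\<^sub>R ((y - t) *\<^sub>R F)"
      using elim by (simp add: algebra_simps)
    also have "(1 / (y - t)) *\<^sub>R ((y - t) *\<^sub>R F) = F" using elim by simp
    finally show ?case by simp
  qed
  ultimately have "((\<lambda>y. (1 / (y - t)) *\<^sub>R (f y - f t)) \<longlongrightarrow> F) (at_right t)"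
    by (simp add: tendsto_cong)
  hence "((\<lambda>y. norm ((1 / (y - t)) *\<^sub>R (f y - f t))) \<longlongrightarrow> norm F) (at_right t)"
    by (rule tendsto_norm)
  moreover have "eventually (\<lambda>y. norm ((1 / (y - t)) *\<^sub>R (f y - f t)) = norm (f y - f t) / (y - t)) (at_right t)"
    using eventually_at_right_less[of t] by eventually_elim simp
  ultimately show ?thesis by (rule Lim_transform_eventually)
qed

lemma norm_derivative_le_lipschitz:
  fixes f :: "'a::real_normed_vector \<Rightarrow> 'b::real_normed_vector"
  assumes f': "(f has_derivative f') (at x)" and lip: "C-lipschitz_on UNIV f"
  shows "norm (f' d) \<le> C * norm d"
proof (rule tendsto_le[OF trivial_limit_at_right_real])
  define line where "line \<tau> = x + \<tau> *\<^sub>R d" for \<tau> :: real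
  have line': "(line has_vector_derivative d) (at_right 0)"
    unfolding line_def by (auto intro!: derivative_eq_intros)
  have "((\<lambda>\<tau>. f (line \<tau>)) has_vector_derivative f' d) (at_right 0)"
    by (rule has_vector_derivative_compose_has_derivative[OF line']) (use f' in \<open>simp add: line_def\<close>)
  thus "((\<lambda>\<tau>. norm (f (line \<tau>) - f (line 0)) / (\<tau> - 0)) \<longlongrightarrow> norm (f' d)) (at_right 0)"
    by (rule norm_difference_quotient_tendsto)
  show "((\<lambda>\<tau>. C * (norm (line \<tau> - line 0) / (\<tau> - 0))) \<longlongrightarrow> C * norm d) (at_right 0)"
    by (intro tendsto_mult tendsto_const norm_difference_quotient_tendsto[OF line'])
  show "eventually (\<lambda>\<tau>. norm (f (line \<tau>) - f (line 0)) / (\<tau> - 0) \<le> C * (norm (line \<tau> - line 0) / (\<tau> - 0)))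
      (at_right 0)"
    using eventually_at_right_less[of 0]
  proof eventually_elim
    case (elim \<tau>)
    have "norm (f (line \<tau>) - f (line 0)) \<le> C * norm (line \<tau> - line 0)"
      using lipschitz_onD[OF lip] by (simp add: dist_norm)
    thus ?case using elim by (simp add: divide_right_mono)
  qed
qed

lemma has_real_derivative_inner_self:
  fixes y :: "real \<Rightarrow> 'a::real_inner"
  assumes "(y has_vector_derivative Y) (at t within S)"
  shows "((\<lambda>s. y s \<bullet> y s) has_real_derivative 2 * (y t \<bullet> Y)) (at t within S)"
proof -
  have d: "(y has_derivative (\<lambda>h. h *\<^sub>R Y)) (at t within S)"
    using assms by (simp add: has_vector_derivative_def)
  have "((\<lambda>s. y s \<bullet> y s) has_derivative (\<lambda>h. y t \<bullet> (h *\<^sub>R Y) + (h *\<^sub>R Y) \<bullet> y t)) (at t within S)"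
    by (rule has_derivative_inner[OF d d])
  moreover have "(\<lambda>h. y t \<bullet> (h *\<^sub>R Y) + (h *\<^sub>R Y) \<bullet> y t) = (\<lambda>h. (2 * (y t \<bullet> Y)) * h)"
    by (auto simp: inner_commute algebra_simps)
  ultimately show ?thesis unfolding has_field_derivative_def by simp
qed

lemma matrix_vector_mult_bound_on_compact:
  fixes J :: "'a::topological_space \<Rightarrow> real^'n^'m"
  assumes "continuous_on S J" "compact S"
  obtains M where "M > 0" "\<And>x d. x \<in> S \<Longrightarrow> norm (J x *v d) \<le> M * norm d"
proof -
  obtain B where B: "\<And>x. x \<in> S \<Longrightarrow> norm (J x) \<le> B"
    using compact_imp_bounded[OF compact_continuous_image[OF assms]] by (auto simp: bounded_iff)
  define M where "M = max 1 (real CARD('m) * real CARD('n) * B)"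
  have "norm (J x *v d) \<le> M * norm d" if x: "x \<in> S" for x d
  proof -
    have entry: "\<bar>J x $ i $ j\<bar> \<le> B" for i j
    proof -
      have "\<bar>J x $ i $ j\<bar> \<le> norm (J x $ i)" by (rule component_le_norm_cart)
      also have "\<dots> \<le> norm (J x)" by (rule Finite_Cartesian_Product.norm_nth_le)
      finally show ?thesis using B[OF x] by linarith
    qed
    have "norm (J x *v d) \<le> onorm ((*v) (J x)) * norm d"
      by (rule onorm[OF matrix_vector_mul_bounded_linear])
    also have "\<dots> \<le> M * norm d"
      using onorm_le_matrix_component[of "J x", OF entry] by (intro mult_right_mono) (auto simp: M_def)
    finally show ?thesis .
  qed
  moreover have "M > 0" by (simp add: M_def less_max_iff_disj)
  ultimately show thesis using that by blast
qed

lemma gradient_comp_graph: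
  fixes \<phi> :: "real^'n \<Rightarrow> real^'N \<Rightarrow> real" and h :: "real^'N \<Rightarrow> real^'n"
  assumes \<phi>': "((\<lambda>z. \<phi> (fst z) (snd z)) has_derivative (\<lambda>z. gx \<bullet> fst z + gu \<bullet> snd z)) (at (h w, w))"
    and h': "(h has_derivative (\<lambda>d. Jh *v d)) (at w)"
    and \<Phi>': "((\<lambda>v. \<phi> (h v) v) has_derivative (\<lambda>d. g \<bullet> d)) (at w)"
  shows "g = transpose Jh *v gx + gu"
proof -
  have "((\<lambda>v. (h v, v)) has_derivative (\<lambda>d. (Jh *v d, d))) (at w)"
    by (intro has_derivative_Pair h' has_derivative_ident)
  from has_derivative_compose[OF this \<phi>']
  have "((\<lambda>v. \<phi> (h v) v) has_derivative (\<lambda>d. gx \<bullet> (Jh *v d) + gu \<bullet> d)) (at w)"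
    by simp
  from has_derivative_unique[OF \<Phi>' this]
  have "g \<bullet> d = gx \<bullet> (Jh *v d) + gu \<bullet> d" for d
    by metis
  moreover have "gx \<bullet> (Jh *v d) = (transpose Jh *v gx) \<bullet> d" for d
    by (metis dot_lmul_matrix transpose_transpose vector_transpose_matrix)
  ultimately have "(g - (transpose Jh *v gx + gu)) \<bullet> d = 0" for d
    by (simp add: inner_diff_left inner_add_left)
  from this[of "g - (transpose Jh *v gx + gu)"] show ?thesis by simp
qed

lemma strongly_convex_imp_strongly_monotone:
  fixes F :: "'a::real_inner \<Rightarrow> real"
  assumes "\<And>u v. F v \<ge> F u + g u \<bullet> (v - u) + (\<mu>/2) * (norm (v - u))^2"
  shows "\<mu> * (norm (u - v))^2 \<le> (g u - g v) \<bullet> (u - v)"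
  using assms[of u v] assms[of v u] by (simp add: norm_minus_commute inner_diff_left inner_diff_right)

lemma gradient_zero_at_minimum:
  fixes F :: "'a::real_inner \<Rightarrow> real"
  assumes "(F has_derivative (\<lambda>d. g \<bullet> d)) (at x)" "\<And>y. F x \<le> F y"
  shows "g = 0"
proof -
  have "(\<lambda>d. g \<bullet> d) = (\<lambda>h. 0)"
    by (rule has_derivative_local_min[OF assms(1)]) (use assms(2) in auto)
  hence "g \<bullet> g = 0" by metis
  thus ?thesis by simp
qed

section \<open>Pointwise dissipation estimates\<close>

lemma powr_add_le_bracketing:
  fixes w \<alpha> a1 b1 \<beta> :: real
  assumes "w \<ge> 0" "\<alpha> \<le> a1" "a1 \<le> b1" "b1 \<le> \<beta>"
  shows "w powr a1 + w powr b1 \<le> 2 * (w powr \<alpha> + w powr \<beta>)"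
proof (cases "w \<le> 1")
  case True
  hence "w powr b1 \<le> w powr a1" "w powr a1 \<le> w powr \<alpha>" using assms by (auto intro: powr_mono')
  thus ?thesis using powr_ge_zero[of w \<beta>] unfolding distrib_left by linarith
next
  case False
  hence "w powr a1 \<le> w powr b1" "w powr b1 \<le> w powr \<beta>" using assms by (auto intro: powr_mono)
  thus ?thesis using powr_ge_zero[of w \<alpha>] unfolding distrib_left by linarith
qed

lemma fxt_rate_of_bracketing_powers:
  fixes D W k r s \<alpha> \<beta> P :: real
  assumes D: "D \<le> -2 * k * (W powr \<alpha> + W powr \<beta>) + P * W"
    and W: "W \<ge> 0" and k: "k \<ge> 0" and exps: "\<alpha> \<le> 1+r" "r \<le> s" "1+s \<le> \<beta>"
  shows "D \<le> fxt_rate k r s P (W^2)"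
proof -
  have sq: "(W^2) powr (e/2) = W powr e" for e
  proof (cases "W = 0")
    case False
    have "(W^2) powr (e/2) = (W powr 2) powr (e/2)" using W by simp
    also have "\<dots> = W powr e" by (simp only: powr_powr) simp
    finally show ?thesis .
  qed simp
  have "W powr (1+r) + W powr (1+s) \<le> 2 * (W powr \<alpha> + W powr \<beta>)"
    using W exps by (intro powr_add_le_bracketing) auto
  hence "k * (W powr (1+r) + W powr (1+s)) \<le> k * (2 * (W powr \<alpha> + W powr \<beta>))"
    using k by (rule mult_left_mono)
  moreover have "-2 * k * (W powr \<alpha> + W powr \<beta>) = - (k * (2 * (W powr \<alpha> + W powr \<beta>)))"
    by simp
  ultimately have "D \<le> -k * (W powr (1+r) + W powr (1+s)) + P * W" using D by linarith
  thus ?thesis using sq[of "1+r"] sq[of "1+s"] sq[of 1] W by (simp add: fxt_rate_def)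
qed

lemma dissipation_dominant_state:
  fixes Y F Dh :: "'a::real_inner"
  assumes A: "Y \<bullet> F \<le> -(a/2) * norm Y powr (2*p) - (a/2) * norm Y powr (2*q)"
    and Dh: "norm Dh \<le> Hb" and k: "0 \<le> k" "k \<le> a/2"
    and exps: "2*p \<le> 1+r" "r \<le> s" "1+s \<le> 2*q" and P: "2*Hb \<le> P"
  shows "2 * (Y \<bullet> (F - Dh)) \<le> fxt_rate k r s P (Y \<bullet> Y)"
proof -
  have "- (Y \<bullet> Dh) \<le> norm Y * norm Dh" using norm_cauchy_schwarz[of Y "-Dh"] by simp
  also have "\<dots> \<le> norm Y * Hb" using Dh by (simp add: mult_left_mono)
  finally have "2 * (Y \<bullet> (F - Dh)) \<le> -a * (norm Y powr (2*p) + norm Y powr (2*q)) + (2 * Hb) * norm Y"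
    using A by (simp add: inner_diff_right algebra_simps)
  also have "\<dots> \<le> -2 * k * (norm Y powr (2*p) + norm Y powr (2*q)) + P * norm Y"
    using k P by (intro add_mono mult_right_mono) auto
  finally have "2 * (Y \<bullet> (F - Dh)) \<le> fxt_rate k r s P ((norm Y)^2)"
    by (rule fxt_rate_of_bracketing_powers[OF _ norm_ge_zero k(1) exps])
  thus ?thesis by (simp add: power2_norm_eq_inner)
qed

lemma perturbed_strongly_monotone:
  fixes g g0 E :: "'a::real_inner"
  assumes mono: "\<mu> * (norm E)^2 \<le> g0 \<bullet> E" and lip: "norm g0 \<le> L * norm E"
    and close: "norm (g - g0) \<le> c * norm E"
  shows "(\<mu> - c) * (norm E)^2 \<le> g \<bullet> E" and "norm g \<le> (L + c) * norm E"
proof -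
  have "\<bar>(g - g0) \<bullet> E\<bar> \<le> norm (g - g0) * norm E" by (rule Cauchy_Schwarz_ineq2)
  also have "\<dots> \<le> c * norm E * norm E" using close by (simp add: mult_right_mono)
  finally have "\<bar>(g - g0) \<bullet> E\<bar> \<le> c * norm E * norm E" .
  thus "(\<mu> - c) * (norm E)^2 \<le> g \<bullet> E"
    using mono by (simp add: inner_diff_left power2_eq_square left_diff_distrib abs_le_iff)
  show "norm g \<le> (L + c) * norm E"
    using norm_triangle_ineq[of g0 "g - g0"] lip close by (simp add: algebra_simps)
qed

lemma inner_phi_xi_lower_bound:
  fixes g E :: "'a::real_inner"
  assumes B: "norm E = B" "B > 0" and gE: "\<delta> * B^2 \<le> g \<bullet> E" and gup: "norm g \<le> \<Lambda> * B"
    and \<delta>: "\<delta> > 0" and xi: "xi1 > 0" "xi2 < 0"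
  shows "\<delta> * \<Lambda> powr (-xi1) * B powr (2-xi1) + \<delta> powr (1-xi2) * B powr (2-xi2) \<le> E \<bullet> phi_xi xi1 xi2 g"
proof -
  have "\<delta> * B * B \<le> g \<bullet> E" using gE by (simp add: power2_eq_square mult.assoc)
  also have "\<dots> \<le> norm g * B" using norm_cauchy_schwarz[of g E] B by simp
  finally have "\<delta> * B * B \<le> norm g * B" .
  hence glo: "\<delta> * B \<le> norm g" using B by simp
  have dB: "\<delta> * B > 0" using \<delta> B by simp
  hence "norm g > 0" using glo by linarith
  hence "g \<noteq> 0" by auto
  have "\<Lambda> * B > 0" using gup \<open>norm g > 0\<close> by linarith
  have phi: "E \<bullet> phi_xi xi1 xi2 g = (norm g powr (-xi1) + norm g powr (-xi2)) * (g \<bullet> E)"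
    using \<open>g \<noteq> 0\<close> by (simp add: phi_xi_def inner_add_right powr_minus_divide inner_commute algebra_simps)
  have "(\<Lambda> * B) powr (-xi1) \<le> norm g powr (-xi1)"
    using gup \<open>norm g > 0\<close> xi by (intro powr_mono2') auto
  moreover have "(\<delta> * B) powr (-xi2) \<le> norm g powr (-xi2)"
    using glo dB xi by (intro powr_mono2) auto
  ultimately have "((\<Lambda> * B) powr (-xi1) + (\<delta> * B) powr (-xi2)) * (\<delta> * B^2)
      \<le> (norm g powr (-xi1) + norm g powr (-xi2)) * (g \<bullet> E)"
    using gE dB B \<delta> by (intro mult_mono add_mono) auto
  moreover have "((\<Lambda> * B) powr (-xi1) + (\<delta> * B) powr (-xi2)) * (\<delta> * B^2) =
      \<delta> * \<Lambda> powr (-xi1) * B powr (2-xi1) + \<delta> powr (1-xi2) * B powr (2-xi2)"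
  proof -
    have "B powr (2 - xi1) = B powr (-xi1) * B^2" "B powr (2 - xi2) = B powr (-xi2) * B^2"
      using powr_add[of B "-xi1" 2] powr_add[of B "-xi2" 2] B by simp_all
    moreover have "\<delta> powr (1 - xi2) = \<delta> powr (-xi2) * \<delta>" using powr_add[of \<delta> "-xi2" 1] \<delta> by simp
    ultimately show ?thesis using B \<delta> \<open>\<Lambda> * B > 0\<close> by (simp add: powr_mult algebra_simps)
  qed
  ultimately show ?thesis using phi by simp
qed

lemma input_error_decrease:
  fixes E g ud :: "'a::real_inner"
  assumes E: "E \<noteq> 0" and gE: "\<delta> * (norm E)^2 \<le> g \<bullet> E" and gup: "norm g \<le> \<Lambda> * norm E"
    and \<delta>: "\<delta> > 0" and xi: "xi1 > 0" "xi2 < 0" and ud: "norm ud \<le> Mv"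
  shows "2 * (E \<bullet> (- phi_xi xi1 xi2 g - ud))
    \<le> -2 * (\<delta> * \<Lambda> powr (-xi1) * norm E powr (2-xi1) + \<delta> powr (1-xi2) * norm E powr (2-xi2))
      + 2 * (norm E * Mv)"
proof -
  have phi: "\<delta> * \<Lambda> powr (-xi1) * norm E powr (2-xi1) + \<delta> powr (1-xi2) * norm E powr (2-xi2)
      \<le> E \<bullet> phi_xi xi1 xi2 g"
    using E gE gup by (intro inner_phi_xi_lower_bound[OF refl _ _ _ \<delta> xi]) auto
  have "- (E \<bullet> ud) \<le> norm E * norm ud" using norm_cauchy_schwarz[of E "-ud"] by simp
  also have "\<dots> \<le> norm E * Mv" using ud by (simp add: mult_left_mono)
  finally have "- (E \<bullet> ud) \<le> norm E * Mv" .
  thus ?thesis using phi by (simp add: inner_diff_right)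
qed

lemma scaled_powr_le:
  fixes k \<gamma> B c e :: real
  assumes "k * \<gamma> powr e \<le> \<gamma>^2 * c" and "\<gamma> > 0" and "B > 0"
  shows "k * (\<gamma> * B) powr e \<le> \<gamma>^2 * c * B powr e"
proof -
  have "k * \<gamma> powr e * B powr e \<le> \<gamma>^2 * c * B powr e"
    using assms(1) by (rule mult_right_mono) simp
  thus ?thesis using assms(2,3) by (simp add: powr_mult mult.assoc)
qed

lemma dissipation_input_error:
  fixes E g ud :: "'a::real_inner"
  assumes E: "E \<noteq> 0" and gE: "\<delta> * (norm E)^2 \<le> g \<bullet> E" and gup: "norm g \<le> \<Lambda> * norm E"
    and \<delta>: "\<delta> > 0" and xi: "xi1 > 0" "xi2 < 0" and ud: "norm ud \<le> Mv" and \<gamma>: "\<gamma> > 0"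
    and k: "0 \<le> k" "k * \<gamma> powr (2-xi1) \<le> \<gamma>^2 * (\<delta> * \<Lambda> powr (-xi1))"
      "k * \<gamma> powr (2-xi2) \<le> \<gamma>^2 * \<delta> powr (1-xi2)"
    and exps: "2-xi1 \<le> 1+r" "r \<le> s" "1+s \<le> 2-xi2" and P: "2*\<gamma>*Mv \<le> P"
  shows "\<gamma>^2 * (2 * (E \<bullet> (- phi_xi xi1 xi2 g - ud))) \<le> fxt_rate k r s P (\<gamma>^2 * (E \<bullet> E))"
proof -
  define B where "B = norm E"
  have B: "B > 0" using E by (simp add: B_def)
  have "\<gamma>^2 * (2 * (E \<bullet> (- phi_xi xi1 xi2 g - ud)))
      \<le> \<gamma>^2 * (-2 * (\<delta> * \<Lambda> powr (-xi1) * B powr (2-xi1) + \<delta> powr (1-xi2) * B powr (2-xi2)) + 2 * (B * Mv))"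
    unfolding B_def by (rule mult_left_mono[OF input_error_decrease[OF E gE gup \<delta> xi ud]]) simp
  also have "\<dots> = -2 * (\<gamma>^2 * (\<delta> * \<Lambda> powr (-xi1)) * B powr (2-xi1))
      - 2 * (\<gamma>^2 * \<delta> powr (1-xi2) * B powr (2-xi2)) + 2 * \<gamma> * Mv * (\<gamma> * B)"
    by (simp add: algebra_simps power2_eq_square)
  also have "\<dots> \<le> -2 * (k * (\<gamma> * B) powr (2-xi1)) - 2 * (k * (\<gamma> * B) powr (2-xi2)) + P * (\<gamma> * B)"
    using scaled_powr_le[OF k(2) \<gamma> B] scaled_powr_le[OF k(3) \<gamma> B]
      mult_right_mono[OF P less_imp_le[OF mult_pos_pos[OF \<gamma> B]]] by linarith
  also have "\<dots> = -2 * k * ((\<gamma> * B) powr (2-xi1) + (\<gamma> * B) powr (2-xi2)) + P * (\<gamma> * B)"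
    by (simp add: algebra_simps)
  also have "\<dots> \<le> fxt_rate k r s P ((\<gamma> * B)^2)"
    using \<gamma> B k(1) exps by (intro fxt_rate_of_bracketing_powers) auto
  also have "(\<gamma> * B)^2 = \<gamma>^2 * (E \<bullet> E)"
    by (simp add: B_def power_mult_distrib power2_norm_eq_inner)
  finally show ?thesis .
qed

section \<open>The closed loop\<close>

text \<open>\<open>\<Omega>\<close> stands for the parameter drift \<open>\<epsilon>\<^sub>0 \<Pi>\<close> and \<open>G\<close> for \<open>\<G>\<^sub>\<theta>\<close>. Assumption (A3) enters only
  through the listed properties of the gradient \<open>gradPhi\<close> of \<open>\<Phi>\<^sub>\<theta>\<close>, and \<open>M\<close> bounds the Jacobian of
  \<open>varphi\<close> on \<open>Theta\<close>.\<close>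

locale tracking_loop =
  fixes f :: "real^'n::finite \<Rightarrow> real^'N::finite \<Rightarrow> real^'n"
    and G :: "real^'m::finite \<Rightarrow> real^'n \<Rightarrow> real^'N \<Rightarrow> real^'N"
    and h :: "real^'N \<Rightarrow> real^'n" and Jh :: "real^'N \<Rightarrow> real^'N^'n"
    and \<Omega> :: "real^'m \<Rightarrow> real^'m" and Theta :: "(real^'m) set"
    and gradPhi :: "real^'m \<Rightarrow> real^'N \<Rightarrow> real^'N"
    and varphi :: "real^'m \<Rightarrow> real^'N" and Jvarphi :: "real^'m \<Rightarrow> real^'m^'N"
    and xi1 xi2 \<gamma> ell a p q L \<mu> K M :: real
  assumes xi1: "0 < xi1" "xi1 < 1" and xi2: "xi2 < 0"
    and h_deriv: "\<And>u. (h has_derivative (\<lambda>d. Jh u *v d)) (at u)"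
    and h_lip: "ell-lipschitz_on UNIV h" and \<gamma>_pos: "\<gamma> > 0" and ell_pos: "ell > 0"
    and a_pos: "a > 0" and p: "0 < p" "p < 1" and q: "q > 1"
    and A1: "\<And>x u uh. norm (x - h uh) \<ge> \<gamma> * norm (u - uh) \<Longrightarrow>
      (x - h uh) \<bullet> f x u \<le> - (a/2) * norm (x - h uh) powr (2*p) - (a/2) * norm (x - h uh) powr (2*q)"
    and \<Omega>_cont: "continuous_on Theta \<Omega>" and Theta_compact: "compact Theta"
    and Theta_inv: "\<And>th. th 0 \<in> Theta \<Longrightarrow>
      (\<forall>t\<ge>0. (th has_vector_derivative \<Omega> (th t)) (at t within {0..})) \<Longrightarrow> \<forall>t\<ge>0. th t \<in> Theta"
    and grad_graph: "\<And>\<theta> u. gradPhi \<theta> u = G \<theta> (h u) u"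
    and grad_mono: "\<And>\<theta> u v. \<mu> * (norm (u - v))^2 \<le> (gradPhi \<theta> u - gradPhi \<theta> v) \<bullet> (u - v)"
    and grad_lip: "\<And>\<theta> u v. norm (gradPhi \<theta> v - gradPhi \<theta> u) \<le> L * norm (v - u)"
    and grad_varphi: "\<And>\<theta>. gradPhi \<theta> (varphi \<theta>) = 0"
    and varphi_deriv: "\<And>\<theta>. (varphi has_derivative (\<lambda>d. Jvarphi \<theta> *v d)) (at \<theta>)"
    and Jvarphi_bound: "\<And>\<theta> d. \<theta> \<in> Theta \<Longrightarrow> norm (Jvarphi \<theta> *v d) \<le> M * norm d"
    and M_pos: "M > 0" and L_nonneg: "L \<ge> 0" and K_pos: "K > 0"
    and A4: "\<And>\<theta> x xh u. norm (G \<theta> xh u - G \<theta> x u) \<le> K * norm (xh - x)"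
    and gain: "\<mu> > K * (ell + \<gamma>)"
begin

definition r_fxt :: real where
  "r_fxt = max (2*p - 1) (1 - xi1)"

definition s_fxt :: real where
  "s_fxt = min (2*q - 1) (1 - xi2)"

definition c_dev :: real where
  "c_dev = K * (\<gamma> + ell)"

definition k_fxt :: real where
  "k_fxt = min (a/2) (min (\<gamma>^2 * ((\<mu> - c_dev) * (L + c_dev) powr (-xi1)) / \<gamma> powr (2 - xi1))
                         (\<gamma>^2 * (\<mu> - c_dev) powr (1 - xi2) / \<gamma> powr (2 - xi2)))"

definition C_dist :: real where
  "C_dist = M * max ell \<gamma>"

definition tracking_\<beta> :: "real \<Rightarrow> real \<Rightarrow> real" where
  "tracking_\<beta> w t = (1 + 1/\<gamma>) * decay_fxt ((1 - r_fxt) * k_fxt / 4) ((s_fxt - 1) * k_fxt / 2) r_fxt s_fxt (max 1 \<gamma> * w) t"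

definition tracking_\<rho> :: "real \<Rightarrow> real" where
  "tracking_\<rho> v = (1 + 1/\<gamma>) * ((4 * C_dist / k_fxt) * v) powr (1 / r_fxt)"

lemma r_fxt: "0 < r_fxt" "r_fxt < 1"
  using p xi1 by (auto simp: r_fxt_def)

lemma s_fxt: "s_fxt > 1"
  using q xi2 by (auto simp: s_fxt_def)

lemma exponents_bracket: "2*p \<le> 1 + r_fxt" "2 - xi1 \<le> 1 + r_fxt" "r_fxt \<le> s_fxt"
  "1 + s_fxt \<le> 2*q" "1 + s_fxt \<le> 2 - xi2"
  using r_fxt s_fxt by (auto simp: r_fxt_def s_fxt_def)

lemma c_dev_lt: "c_dev < \<mu>"
  using gain by (simp add: c_dev_def add.commute)

lemma k_fxt_pos: "k_fxt > 0"
proof -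
  have "c_dev > 0" using K_pos \<gamma>_pos ell_pos by (simp add: c_dev_def)
  thus ?thesis using a_pos c_dev_lt L_nonneg \<gamma>_pos by (simp add: k_fxt_def)
qed

lemma k_fxt_le: "k_fxt \<le> a/2"
  "k_fxt * \<gamma> powr (2 - xi1) \<le> \<gamma>^2 * ((\<mu> - c_dev) * (L + c_dev) powr (-xi1))"
  "k_fxt * \<gamma> powr (2 - xi2) \<le> \<gamma>^2 * (\<mu> - c_dev) powr (1 - xi2)"
proof -
  have "k_fxt \<le> \<gamma>^2 * ((\<mu> - c_dev) * (L + c_dev) powr (-xi1)) / \<gamma> powr (2 - xi1)"
    "k_fxt \<le> \<gamma>^2 * (\<mu> - c_dev) powr (1 - xi2) / \<gamma> powr (2 - xi2)"
    unfolding k_fxt_def by simp_all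
  thus "k_fxt * \<gamma> powr (2 - xi1) \<le> \<gamma>^2 * ((\<mu> - c_dev) * (L + c_dev) powr (-xi1))"
    "k_fxt * \<gamma> powr (2 - xi2) \<le> \<gamma>^2 * (\<mu> - c_dev) powr (1 - xi2)"
    using \<gamma>_pos by (simp_all add: pos_le_divide_eq)
  show "k_fxt \<le> a/2" unfolding k_fxt_def by (rule min.cobounded1)
qed

lemma C_dist_ge: "M * ell \<le> C_dist" "M * \<gamma> \<le> C_dist"
  unfolding C_dist_def using M_pos by (simp_all add: mult_left_mono)

lemma C_dist_pos: "C_dist > 0"
  using M_pos ell_pos by (simp add: C_dist_def less_max_iff_disj)

lemma classKL_FxT_tracking_\<beta>: "classKL_FxT tracking_\<beta>"
  unfolding tracking_\<beta>_def[abs_def]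
  using r_fxt s_fxt k_fxt_pos \<gamma>_pos
  by (intro classKL_FxT_decay_fxt) (auto simp: less_max_iff_disj add_pos_pos)

lemma classK_tracking_\<rho>: "classK tracking_\<rho>"
  unfolding tracking_\<rho>_def[abs_def]
  using \<gamma>_pos C_dist_pos k_fxt_pos r_fxt by (intro classK_scaled_powr) (auto simp: add_pos_pos)

lemma Jh_bound: "norm (Jh w *v d) \<le> ell * norm d"
  by (rule norm_derivative_le_lipschitz[OF h_deriv h_lip])

end

locale tracking_solution = tracking_loop +
  fixes x :: "real \<Rightarrow> real^'n" and u :: "real \<Rightarrow> real^'N" and th :: "real \<Rightarrow> real^'m"
  assumes th_0: "th 0 \<in> Theta"
    and x_deriv: "\<And>t. t \<ge> 0 \<Longrightarrow> (x has_vector_derivative f (x t) (u t)) (at t within {0..})"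
    and u_deriv: "\<And>t. t \<ge> 0 \<Longrightarrow>
      (u has_vector_derivative - phi_xi xi1 xi2 (G (th t) (x t) (u t))) (at t within {0..})"
    and th_deriv: "\<And>t. t \<ge> 0 \<Longrightarrow> (th has_vector_derivative \<Omega> (th t)) (at t within {0..})"
begin

definition v_sup :: real where
  "v_sup = (SUP s\<in>{0..}. norm (\<Omega> (th s)))"

definition y :: "real \<Rightarrow> real^'n" where
  "y t = x t - h (varphi (th t))"

definition e :: "real \<Rightarrow> real^'N" where
  "e t = u t - varphi (th t)"

definition drift :: "real \<Rightarrow> real^'N" where
  "drift t = Jvarphi (th t) *v \<Omega> (th t)"

lemma th_in_Theta: "t \<ge> 0 \<Longrightarrow> th t \<in> Theta"
  using Theta_inv[of th] th_0 th_deriv by blast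

lemma \<Omega>_le_v_sup:
  assumes "t \<ge> 0"
  shows "norm (\<Omega> (th t)) \<le> v_sup"
proof -
  have "bounded ((\<lambda>\<theta>. norm (\<Omega> \<theta>)) ` Theta)"
    using Theta_compact \<Omega>_cont
    by (intro compact_imp_bounded compact_continuous_image continuous_intros) auto
  hence "bdd_above ((\<lambda>s. norm (\<Omega> (th s))) ` {0..})"
    by (rule bdd_above_mono[OF bounded_imp_bdd_above]) (auto intro: th_in_Theta)
  thus ?thesis unfolding v_sup_def using assms by (intro cSUP_upper) auto
qed

lemma v_sup_nonneg: "v_sup \<ge> 0"
  using \<Omega>_le_v_sup[of 0] norm_ge_zero[of "\<Omega> (th 0)"] by linarith

lemma drift_le:
  assumes "t \<ge> 0"
  shows "norm (drift t) \<le> M * v_sup"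
proof -
  have "norm (drift t) \<le> M * norm (\<Omega> (th t))"
    unfolding drift_def by (rule Jvarphi_bound[OF th_in_Theta[OF assms]])
  also have "\<dots> \<le> M * v_sup"
    using \<Omega>_le_v_sup[OF assms] less_imp_le[OF M_pos] by (rule mult_left_mono)
  finally show ?thesis .
qed

lemma drift_terms_le:
  assumes t: "t \<ge> 0"
  shows "norm (Jh (varphi (th t)) *v drift t) \<le> C_dist * v_sup" and "\<gamma> * norm (drift t) \<le> C_dist * v_sup"
proof -
  have "norm (Jh (varphi (th t)) *v drift t) \<le> ell * norm (drift t)" by (rule Jh_bound)
  also have "\<dots> \<le> ell * (M * v_sup)" using drift_le[OF t] less_imp_le[OF ell_pos] by (rule mult_left_mono)
  also have "\<dots> = (M * ell) * v_sup" by simp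
  also have "\<dots> \<le> C_dist * v_sup" using C_dist_ge(1) v_sup_nonneg by (rule mult_right_mono)
  finally show "norm (Jh (varphi (th t)) *v drift t) \<le> C_dist * v_sup" .
  have "\<gamma> * norm (drift t) \<le> \<gamma> * (M * v_sup)" using drift_le[OF t] less_imp_le[OF \<gamma>_pos] by (rule mult_left_mono)
  also have "\<dots> = (M * \<gamma>) * v_sup" by simp
  also have "\<dots> \<le> C_dist * v_sup" using C_dist_ge(2) v_sup_nonneg by (rule mult_right_mono)
  finally show "\<gamma> * norm (drift t) \<le> C_dist * v_sup" .
qed

lemma varphi_th_deriv:
  "t \<ge> 0 \<Longrightarrow> ((\<lambda>s. varphi (th s)) has_vector_derivative drift t) (at t within {0..})"
  unfolding drift_def by (rule has_vector_derivative_compose_has_derivative[OF th_deriv varphi_deriv])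

lemma y_deriv:
  "t \<ge> 0 \<Longrightarrow> (y has_vector_derivative f (x t) (u t) - Jh (varphi (th t)) *v drift t) (at t within {0..})"
  unfolding y_def
  by (intro has_vector_derivative_diff x_deriv has_vector_derivative_compose_has_derivative[OF varphi_th_deriv h_deriv])

lemma e_deriv:
  "t \<ge> 0 \<Longrightarrow> (e has_vector_derivative - phi_xi xi1 xi2 (G (th t) (x t) (u t)) - drift t) (at t within {0..})"
  unfolding e_def by (intro has_vector_derivative_diff u_deriv varphi_th_deriv)

definition V1 :: "real \<Rightarrow> real" where
  "V1 t = y t \<bullet> y t"

definition V2 :: "real \<Rightarrow> real" where
  "V2 t = \<gamma>^2 * (e t \<bullet> e t)"

definition V1' :: "real \<Rightarrow> real" where
  "V1' t = 2 * (y t \<bullet> (f (x t) (u t) - Jh (varphi (th t)) *v drift t))"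

definition V2' :: "real \<Rightarrow> real" where
  "V2' t = \<gamma>^2 * (2 * (e t \<bullet> (- phi_xi xi1 xi2 (G (th t) (x t) (u t)) - drift t)))"

lemma V1_deriv: "t \<ge> 0 \<Longrightarrow> (V1 has_real_derivative V1' t) (at t within {0..})"
  unfolding V1_def[abs_def] V1'_def by (rule has_real_derivative_inner_self[OF y_deriv])

lemma V2_deriv: "t \<ge> 0 \<Longrightarrow> (V2 has_real_derivative V2' t) (at t within {0..})"
  unfolding V2_def[abs_def] V2'_def by (intro DERIV_cmult has_real_derivative_inner_self e_deriv)

lemma V1_decay:
  assumes t: "t \<ge> 0" and dominant: "V2 t \<le> V1 t"
  shows "V1' t \<le> fxt_rate k_fxt r_fxt s_fxt (2 * C_dist * v_sup) (V1 t)"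
proof -
  have "(\<gamma> * norm (e t))^2 \<le> (norm (y t))^2"
    using dominant by (simp add: V1_def V2_def power2_norm_eq_inner power_mult_distrib)
  hence "\<gamma> * norm (e t) \<le> norm (y t)" by (rule power2_le_imp_le) simp
  hence A: "y t \<bullet> f (x t) (u t) \<le> -(a/2) * norm (y t) powr (2*p) - (a/2) * norm (y t) powr (2*q)"
    using A1[where x="x t" and u="u t" and uh="varphi (th t)"] by (simp add: y_def e_def)
  show ?thesis
    unfolding V1'_def V1_def
    by (rule dissipation_dominant_state[OF A drift_terms_le(1)[OF t] less_imp_le[OF k_fxt_pos] k_fxt_le(1)
          exponents_bracket(1,3,4)]) simp
qed

lemma gradient_deviation:
  assumes dominant: "V1 t \<le> V2 t"
  shows "norm (G (th t) (x t) (u t) - gradPhi (th t) (u t)) \<le> c_dev * norm (e t)"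
proof -
  have "(norm (y t))^2 \<le> (\<gamma> * norm (e t))^2"
    using dominant by (simp add: V1_def V2_def power2_norm_eq_inner power_mult_distrib)
  hence y_le: "norm (y t) \<le> \<gamma> * norm (e t)" by (rule power2_le_imp_le) (use \<gamma>_pos in simp)
  have "norm (x t - h (u t)) \<le> norm (y t) + norm (h (varphi (th t)) - h (u t))"
    using norm_triangle_ineq[of "y t" "h (varphi (th t)) - h (u t)"] by (simp add: y_def)
  also have "norm (h (varphi (th t)) - h (u t)) \<le> ell * norm (e t)"
    using lipschitz_onD[OF h_lip, of "varphi (th t)" "u t"] by (simp add: dist_norm e_def norm_minus_commute)
  finally have "norm (x t - h (u t)) \<le> (\<gamma> + ell) * norm (e t)" using y_le by (simp add: algebra_simps)
  hence "K * norm (x t - h (u t)) \<le> K * ((\<gamma> + ell) * norm (e t))"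
    using less_imp_le[OF K_pos] by (rule mult_left_mono)
  moreover have "norm (G (th t) (x t) (u t) - gradPhi (th t) (u t)) \<le> K * norm (x t - h (u t))"
    using A4[where \<theta>="th t" and xh="x t" and x="h (u t)" and u="u t"] by (simp add: grad_graph)
  ultimately show ?thesis by (simp add: c_dev_def mult.assoc)
qed

lemma V2_decay:
  assumes t: "t \<ge> 0" and dominant: "V1 t \<le> V2 t" and pos: "V2 t > 0"
  shows "V2' t \<le> fxt_rate k_fxt r_fxt s_fxt (2 * C_dist * v_sup) (V2 t)"
proof -
  let ?g0 = "gradPhi (th t) (u t)"
  have "e t \<noteq> 0" using pos by (auto simp: V2_def)
  have mono: "\<mu> * (norm (e t))^2 \<le> ?g0 \<bullet> e t"
    using grad_mono[where \<theta>="th t" and u="u t" and v="varphi (th t)"] by (simp add: grad_varphi e_def)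
  have lip: "norm ?g0 \<le> L * norm (e t)"
    using grad_lip[where \<theta>="th t" and u="varphi (th t)" and v="u t"] by (simp add: grad_varphi e_def)
  note perturbed = perturbed_strongly_monotone[OF mono lip gradient_deviation[OF dominant]]
  have "0 < \<mu> - c_dev" using c_dev_lt by simp
  show ?thesis
    unfolding V2'_def V2_def
    by (rule dissipation_input_error[OF \<open>e t \<noteq> 0\<close> perturbed \<open>0 < \<mu> - c_dev\<close> xi1(1) xi2 order.refl \<gamma>_pos
          less_imp_le[OF k_fxt_pos] k_fxt_le(2,3) exponents_bracket(2,3,5)])
       (use drift_terms_le(2)[OF t] in simp)
qed

lemma sqrt_max_V_le:
  assumes t: "t \<ge> 0"
  shows "sqrt (max (V1 t) (V2 t)) \<le> max ((4 * C_dist / k_fxt * v_sup) powr (1 / r_fxt))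
    (decay_fxt ((1 - r_fxt) * k_fxt / 4) ((s_fxt - 1) * k_fxt / 2) r_fxt s_fxt (sqrt (max (V1 0) (V2 0))) t)"
    (is "_ \<le> max ?\<rho>0 ?decay")
proof (rule field_le_epsilon)
  \<comment> \<open>\<open>?\<rho>0\<close> vanishes when \<open>v_sup = 0\<close>, but \<open>fxt_lyapunov_pair\<close> needs a positive level\<close>
  fix \<epsilon> :: real assume \<epsilon>: "\<epsilon> > 0"
  have \<rho>0: "?\<rho>0 \<ge> 0" by simp
  have \<rho>0_r: "?\<rho>0 powr r_fxt = 4 * C_dist / k_fxt * v_sup"
    using r_fxt C_dist_pos k_fxt_pos v_sup_nonneg by (simp add: powr_powr)
  have "2 * C_dist * v_sup = (k_fxt/2) * ?\<rho>0 powr r_fxt"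
    unfolding \<rho>0_r using k_fxt_pos by simp
  also have "\<dots> \<le> (k_fxt/2) * (?\<rho>0 + \<epsilon>) powr r_fxt"
    using r_fxt \<epsilon> k_fxt_pos by (intro mult_left_mono powr_mono2) auto
  finally have gain: "2 * C_dist * v_sup \<le> (k_fxt/2) * (?\<rho>0 + \<epsilon>) powr r_fxt" .
  have \<rho>_pos: "0 < ?\<rho>0 + \<epsilon>" using \<rho>0 \<epsilon> by linarith
  interpret pair: fxt_lyapunov_pair V1 V2 V1' V2' k_fxt r_fxt s_fxt "2 * C_dist * v_sup" "?\<rho>0 + \<epsilon>"
  proof unfold_locales
    fix t assume t: "0 \<le> t" "V1 t \<le> V2 t" and above: "(?\<rho>0 + \<epsilon>)^2 \<le> V2 t"
    have "0 < V2 t" by (rule less_le_trans[OF zero_less_power[OF \<rho>_pos] above])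
    with t show "V2' t \<le> fxt_rate k_fxt r_fxt s_fxt (2 * C_dist * v_sup) (V2 t)"
      by (rule V2_decay)
  qed (use V1_deriv V2_deriv k_fxt_pos r_fxt s_fxt \<rho>_pos gain V1_decay in auto)
  have "sqrt (pair.Vmax t) \<le> max (?\<rho>0 + \<epsilon>) (decay_fxt ((1 - r_fxt) * k_fxt / 4) ((s_fxt - 1) * k_fxt / 2)
      r_fxt s_fxt (sqrt (pair.Vmax 0)) t)"
    by (rule pair.sqrt_Vmax_le[OF t])
  moreover have "max (?\<rho>0 + \<epsilon>) ?decay \<le> max ?\<rho>0 ?decay + \<epsilon>"
    using \<epsilon> by (auto simp: max_def)
  ultimately show "sqrt (max (V1 t) (V2 t)) \<le> max ?\<rho>0 ?decay + \<epsilon>"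
    unfolding pair.Vmax_def by (rule order_trans)
qed

lemma sqrt_V1: "sqrt (V1 t) = norm (y t)"
  by (simp add: V1_def norm_eq_sqrt_inner)

lemma sqrt_V2: "sqrt (V2 t) = \<gamma> * norm (e t)"
  using \<gamma>_pos by (simp add: V2_def norm_eq_sqrt_inner real_sqrt_mult)

lemma norm_errors_le: "norm (y t, e t) \<le> (1 + 1/\<gamma>) * sqrt (max (V1 t) (V2 t))"
proof -
  define S where "S = sqrt (max (V1 t) (V2 t))"
  have y_le: "norm (y t) \<le> S" and "\<gamma> * norm (e t) \<le> S"
    unfolding S_def sqrt_V1[symmetric] sqrt_V2[symmetric] by simp_all
  hence "norm (e t) \<le> S / \<gamma>" using \<gamma>_pos by (simp add: pos_le_divide_eq mult.commute)
  hence "norm (y t, e t) \<le> S + S / \<gamma>" using norm_Pair_le[of "y t" "e t"] y_le by linarith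
  also have "S + S / \<gamma> = (1 + 1/\<gamma>) * S" by (simp add: algebra_simps)
  finally show ?thesis unfolding S_def .
qed

lemma sqrt_max_V_le_norm_errors: "sqrt (max (V1 t) (V2 t)) \<le> max 1 \<gamma> * norm (y t, e t)"
proof -
  define N where "N = norm (y t, e t)"
  have N: "0 \<le> N" by (simp add: N_def)
  have "norm (y t) \<le> N" "norm (e t) \<le> N"
    using norm_fst_le[of "y t" "e t"] norm_snd_le[of "e t" "y t"] by (auto simp: N_def)
  moreover have "1 * N \<le> max 1 \<gamma> * N" "\<gamma> * N \<le> max 1 \<gamma> * N"
    using mult_right_mono[OF _ N, of 1 "max 1 \<gamma>"] mult_right_mono[OF _ N, of \<gamma> "max 1 \<gamma>"] by simp_all
  moreover have "\<gamma> * norm (e t) \<le> \<gamma> * N" using \<open>norm (e t) \<le> N\<close> \<gamma>_pos by simp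
  ultimately have "norm (y t) \<le> max 1 \<gamma> * N" "\<gamma> * norm (e t) \<le> max 1 \<gamma> * N"
    by linarith+
  thus ?thesis unfolding N_def using sqrt_V1[of t] sqrt_V2[of t]
    by (cases "V1 t \<le> V2 t") (simp_all add: max.absorb1 max.absorb2)
qed

theorem tracking_iss:
  assumes t: "t \<ge> 0"
  shows "norm (y t, e t) \<le> tracking_\<beta> (norm (y 0, e 0)) t + tracking_\<rho> v_sup"
proof -
  let ?decay = "decay_fxt ((1 - r_fxt) * k_fxt / 4) ((s_fxt - 1) * k_fxt / 2) r_fxt s_fxt"
  let ?\<rho>0 = "(4 * C_dist / k_fxt * v_sup) powr (1 / r_fxt)"
  have decay0: "?decay (sqrt (max (V1 0) (V2 0))) t \<le> ?decay (max 1 \<gamma> * norm (y 0, e 0)) t"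
    using s_fxt k_fxt_pos r_fxt t sqrt_max_V_le_norm_errors[of 0]
    by (intro decay_fxt_mono) (auto simp: V1_def le_max_iff_disj)
  have "0 \<le> ?decay (max 1 \<gamma> * norm (y 0, e 0)) t" "0 \<le> ?\<rho>0"
    by (simp_all add: decay_fxt_nonneg)
  hence "max ?\<rho>0 (?decay (sqrt (max (V1 0) (V2 0))) t) \<le> ?decay (max 1 \<gamma> * norm (y 0, e 0)) t + ?\<rho>0"
    using decay0 by (intro max.boundedI) linarith+
  hence "sqrt (max (V1 t) (V2 t)) \<le> ?decay (max 1 \<gamma> * norm (y 0, e 0)) t + ?\<rho>0"
    using sqrt_max_V_le[OF t] by linarith
  hence "(1 + 1/\<gamma>) * sqrt (max (V1 t) (V2 t)) \<le> (1 + 1/\<gamma>) * (?decay (max 1 \<gamma> * norm (y 0, e 0)) t + ?\<rho>0)"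
    using \<gamma>_pos by (intro mult_left_mono) auto
  thus ?thesis
    using norm_errors_le[of t] by (simp add: tracking_\<beta>_def tracking_\<rho>_def distrib_left)
qed

end

theorem (in tracking_loop) closed_loop_iss:
  "th 0 \<in> Theta \<and>
     (\<forall>t\<ge>0. (x has_vector_derivative f (x t) (u t)) (at t within {0..})
            \<and> (u has_vector_derivative - phi_xi xi1 xi2 (G (th t) (x t) (u t))) (at t within {0..})
            \<and> (th has_vector_derivative \<Omega> (th t)) (at t within {0..}))
   \<longrightarrow> (\<forall>t\<ge>0. norm (x t - h (varphi (th t)), u t - varphi (th t))
         \<le> tracking_\<beta> (norm (x 0 - h (varphi (th 0)), u 0 - varphi (th 0))) t
           + tracking_\<rho> (SUP s\<in>{0..}. norm (\<Omega> (th s))))"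
proof (intro impI allI)
  assume sol: "th 0 \<in> Theta \<and>
     (\<forall>t\<ge>0. (x has_vector_derivative f (x t) (u t)) (at t within {0..})
            \<and> (u has_vector_derivative - phi_xi xi1 xi2 (G (th t) (x t) (u t))) (at t within {0..})
            \<and> (th has_vector_derivative \<Omega> (th t)) (at t within {0..}))"
  interpret tracking_solution f G h Jh \<Omega> Theta gradPhi varphi Jvarphi xi1 xi2 \<gamma> ell a p q L \<mu> K M x u th
    by (unfold_locales; use sol in blast)
  fix t :: real assume "t \<ge> 0"
  thus "norm (x t - h (varphi (th t)), u t - varphi (th t))
      \<le> tracking_\<beta> (norm (x 0 - h (varphi (th 0)), u 0 - varphi (th 0))) t
        + tracking_\<rho> (SUP s\<in>{0..}. norm (\<Omega> (th s)))"
    using tracking_iss by (simp add: y_def e_def v_sup_def)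
qed

theorem theorem2:
  fixes f :: "real^'n::finite \<Rightarrow> real^'N::finite \<Rightarrow> real^'n"
    and phi :: "real^'m::finite \<Rightarrow> real^'n \<Rightarrow> real^'N \<Rightarrow> real"
    and gx :: "real^'m \<Rightarrow> real^'n \<Rightarrow> real^'N \<Rightarrow> real^'n"
    and gu :: "real^'m \<Rightarrow> real^'n \<Rightarrow> real^'N \<Rightarrow> real^'N"
    and h :: "real^'N \<Rightarrow> real^'n" and Jh :: "real^'N \<Rightarrow> real^'N^'n"
    and Pi :: "real^'m \<Rightarrow> real^'m" and Theta :: "(real^'m) set"
    and gradPhi :: "real^'m \<Rightarrow> real^'N \<Rightarrow> real^'N"
    and varphi :: "real^'m \<Rightarrow> real^'N" and Jvarphi :: "real^'m \<Rightarrow> real^'m^'N"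
    and xi1 xi2 eps0 \<gamma> ell a p q L \<mu> K :: real
  assumes f_cont: "continuous_on UNIV (\<lambda>z. f (fst z) (snd z))"
    and xi1: "0 < xi1" "xi1 < 1" and xi2: "xi2 < 0" and eps0_pos: "eps0 > 0"
    \<comment> \<open>phi_theta is C^1 in (x,u), with gradient (gx, gu)\<close>
    and phi_deriv: "\<And>\<theta> x u. ((\<lambda>z. phi \<theta> (fst z) (snd z)) has_derivative
          (\<lambda>z. gx \<theta> x u \<bullet> fst z + gu \<theta> x u \<bullet> snd z)) (at (x, u))"
    and gx_cont: "\<And>\<theta>. continuous_on UNIV (\<lambda>z. gx \<theta> (fst z) (snd z))"
    and gu_cont: "\<And>\<theta>. continuous_on UNIV (\<lambda>z. gu \<theta> (fst z) (snd z))"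
    \<comment> \<open>(A1)\<close>
    and h_deriv: "\<And>u. (h has_derivative (\<lambda>d. Jh u *v d)) (at u)"
    and Jh_cont: "continuous_on UNIV Jh"
    and h_lip: "ell-lipschitz_on UNIV h"
    and \<gamma>_pos: "\<gamma> > 0" and ell_pos: "ell > 0"
    and f_eq: "\<And>u. f (h u) u = 0"
    and a_pos: "a > 0" and p: "0 < p" "p < 1" and q: "q > 1"
    and A1: "\<And>x u uh. norm (x - h uh) \<ge> \<gamma> * norm (u - uh) \<Longrightarrow>
          (x - h uh) \<bullet> f x u \<le> - (a/2) * norm (x - h uh) powr (2*p) - (a/2) * norm (x - h uh) powr (2*q)"
    \<comment> \<open>(A2)\<close>
    and Pi_lip: "\<exists>C. C-lipschitz_on UNIV Pi"
    and Theta_compact: "compact Theta"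
    and Theta_inv: "\<And>th. th 0 \<in> Theta \<Longrightarrow>
          (\<forall>t\<ge>0. (th has_vector_derivative (eps0 *\<^sub>R Pi (th t))) (at t within {0..})) \<Longrightarrow>
          \<forall>t\<ge>0. th t \<in> Theta"
    \<comment> \<open>(A3), with Phi_theta(u) = phi_theta(h u, u)\<close>
    and Phi_deriv: "\<And>\<theta> u. ((\<lambda>v. phi \<theta> (h v) v) has_derivative (\<lambda>d. gradPhi \<theta> u \<bullet> d)) (at u)"
    and gradPhi_cont: "\<And>\<theta>. continuous_on UNIV (gradPhi \<theta>)"
    and L_pos: "L > 0" and \<mu>_pos: "\<mu> > 0"
    and Phi_smooth: "\<And>\<theta> u uh. norm (gradPhi \<theta> uh - gradPhi \<theta> u) \<le> L * norm (uh - u)"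
    and Phi_strconv: "\<And>\<theta> u uh. phi \<theta> (h uh) uh \<ge>
          phi \<theta> (h u) u + gradPhi \<theta> u \<bullet> (uh - u) + (\<mu>/2) * (norm (uh - u))\<^sup>2"
    and varphi_deriv: "\<And>\<theta>. (varphi has_derivative (\<lambda>d. Jvarphi \<theta> *v d)) (at \<theta>)"
    and Jvarphi_cont: "continuous_on UNIV Jvarphi"
    and varphi_argmin: "\<And>\<theta> u. phi \<theta> (h (varphi \<theta>)) (varphi \<theta>) \<le> phi \<theta> (h u) u"
    \<comment> \<open>(A4)\<close>
    and K_pos: "K > 0"
    and A4: "\<And>\<theta> x xh u. norm (Gmap Jh gx gu \<theta> xh u - Gmap Jh gx gu \<theta> x u) \<le> K * norm (xh - x)"
    and gain: "\<mu> > K * (ell + \<gamma>)"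
  shows "\<exists>\<beta> \<rho>. classKL_FxT \<beta> \<and> classK \<rho> \<and>
    (\<forall>(x :: real \<Rightarrow> real^'n) (u :: real \<Rightarrow> real^'N) (th :: real \<Rightarrow> real^'m).
       th 0 \<in> Theta \<and>
       (\<forall>t\<ge>0. (x has_vector_derivative f (x t) (u t)) (at t within {0..})
              \<and> (u has_vector_derivative - phi_xi xi1 xi2 (Gmap Jh gx gu (th t) (x t) (u t))) (at t within {0..})
              \<and> (th has_vector_derivative eps0 *\<^sub>R Pi (th t)) (at t within {0..}))
       \<longrightarrow> (\<forall>t\<ge>0. norm (x t - h (varphi (th t)), u t - varphi (th t))
             \<le> \<beta> (norm (x 0 - h (varphi (th 0)), u 0 - varphi (th 0))) t
                + \<rho> (SUP s\<in>{0..}. norm (eps0 *\<^sub>R Pi (th s)))))"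
proof -
  obtain M where M: "M > 0" "\<And>\<theta> d. \<theta> \<in> Theta \<Longrightarrow> norm (Jvarphi \<theta> *v d) \<le> M * norm d"
    using matrix_vector_mult_bound_on_compact[OF continuous_on_subset[OF Jvarphi_cont] Theta_compact] by blast
  obtain C where "C-lipschitz_on UNIV Pi" using Pi_lip by blast
  hence "continuous_on Theta Pi" by (rule continuous_on_subset[OF lipschitz_on_continuous_on]) simp
  hence \<Omega>_cont: "continuous_on Theta (\<lambda>\<theta>. eps0 *\<^sub>R Pi \<theta>)" by (intro continuous_intros)
  interpret tracking_loop f "Gmap Jh gx gu" h Jh "\<lambda>\<theta>. eps0 *\<^sub>R Pi \<theta>" Theta gradPhi varphi Jvarphi
    xi1 xi2 \<gamma> ell a p q L \<mu> K M
  proof unfold_locales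
    show "gradPhi \<theta> u = Gmap Jh gx gu \<theta> (h u) u" for \<theta> u
      unfolding Gmap_def by (rule gradient_comp_graph[OF phi_deriv h_deriv Phi_deriv])
    show "\<mu> * (norm (u - v))^2 \<le> (gradPhi \<theta> u - gradPhi \<theta> v) \<bullet> (u - v)" for \<theta> u v
      by (rule strongly_convex_imp_strongly_monotone[where F="\<lambda>v. phi \<theta> (h v) v", OF Phi_strconv])
    show "gradPhi \<theta> (varphi \<theta>) = 0" for \<theta>
      by (rule gradient_zero_at_minimum[OF Phi_deriv varphi_argmin])
  qed (fact xi1 xi2 h_deriv h_lip \<gamma>_pos ell_pos a_pos p q A1 \<Omega>_cont Theta_compact Theta_inv Phi_smooth
         varphi_deriv M less_imp_le[OF L_pos] K_pos A4 gain)+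
  show ?thesis
    using classKL_FxT_tracking_\<beta> classK_tracking_\<rho> closed_loop_iss by blast
qed

end
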